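(* For $0\le i\le N-1$ and $k\ge0$: (i) $H^{(i)}_k(u+\frac i2)=(-1)^i\delta_{ik}$ if $0\le k\le N-1$, and for $k\ge N$, \[ H^{(i)}_k\Bigl(u+\frac i2\Bigr)=-\det_{1\le j,l\le k-N+1}\Bigl(T^{(\lambda'_j-j+l)}_1\Bigl(u+\frac{N-2-\lambda'_j+j+l}{2}\Bigr)\Bigr),\qquad \lambda'_j=1+(N-i-1)\delta_{j1}. \] (ii) If $F$ is a field containing $\mathcal K$ and $w_1,\dots,w_N:\mathbb C\to F$ satisfy $L(u)w_m(u)=0$ for all $m$ with $[0,1,\dots,N-1]\neq0$ for all $u$, then for all $k\ge0$ \[ H^{(i)}_k\Bigl(u+\frac i2\Bigr)=-\frac{[0,1,\dots,i-1,i+1,\dots,N-1,k]}{[0,1,\dots,N-1]}. \]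
   Context: Fix an integer $n\ge 2$ and put $N=2n+2$. Let $Q_a(u)$ ($1\le a\le n$, $u\in\mathbb C$) be algebraically independent commuting indeterminates, $\mathcal K$ the field of fractions of $\mathbb Z[Q_a(u)^{\pm1}]$. Put $d_a=1+\delta_{an}$, $Y_a(u)=Q_a(u-\frac{d_a}{2})/Q_a(u+\frac{d_a}{2})$ for $1\le a\le n$, $Y_0(u)=1$. Let $J=\{1\prec2\prec\cdots\prec n\prec\bar n\prec\cdots\prec\bar2\prec\bar1\}$. For $1\le a\le n$ set $z_a(u)=\frac{Y_a(u+\frac a2)}{Y_{a-1}(u+\frac{a+1}2)}$, $z_{\bar a}(u)=\frac{Y_{a-1}(u+\frac{2n-a+3}2)}{Y_a(u+\frac{2n-a+4}2)}$; set $x_a(u)=z_a(u)$, $x_{2n+3-a}(u)=z_{\bar a}(u)$ for $1\le a\le n$, and $x_{n+1}(u)=-x_{n+2}(u)=\frac{Q_n(u+\frac n2)Q_n(u+\frac{n+4}2)}{Q_n(u+\frac{n+2}2)^2}$. $D$ is the shift operator ($D\,c(u)=c(u+1)D$), acting on $w:\mathbb C\to F$ by $(\sum_jc_jD^j)w(u)=\sum_jc_j(u)w(u+j)$. Define $L(u)=\prod_{i=1}^{N}(x_i(u+n+1-i)-D)$, factors ordered $i=1,\dots,N$ from left to right. For $1\le a\le n$ define $T^{(a)}_1(u)$ by $T^{(a)}_1(u+\frac12)=\sum\prod_{k=1}^a z_{i_k}(u+\frac{a+1-2k}{2})$ over $(i_1,\dots,i_a)\in J^a$ with $i_1\prec\cdots\prec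 i_a$ such that whenever $i_k=c$, $i_l=\bar c$ ($1\le c\le n$) one has $n+k-l\ge c$. Set $T^{(0)}_1=1$, $T^{(a)}_1=0$ for $a<0$, $T^{(n+1)}_1=0$, $T^{(a)}_1=-T^{(N-a)}_1$ for $a\ge n+2$ (so $T^{(N)}_1=-1$, $T^{(a)}_1=0$ for $a>N$). Define $H^{(i)}_k(u)$ for $0\le i\le N-1$, $k\in\mathbb Z_{\ge0}$, $u\in\mathbb C$ by $H^{(i)}_0(u)=\delta_{i0}$ and the recursion $H^{(i)}_{k+1}(u+\frac i2)=-T^{(i)}_1(u+\frac i2)H^{(N-1)}_k(u+\frac{N+1}2)-H^{(i-1)}_k(u+\frac{i+1}2)$, with $H^{(-1)}_k:=0$. A determinant of size $0$ is $1$. Casorati determinants: for integers $i_1,\dots,i_m$ ($m\le N$), $[i_1,\dots,i_m]$ is the function $u\mapsto\det(w_r(u+i_s))_{1\le r,s\le m}$. *)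

theory Defs
  imports Main "Jordan_Normal_Form.Determinant"
begin

(* Q :: nat => complex => 'a  gives the images Q_a(u) (1 <= a <= n) in the field 'a. *)

text \<open>The field 'a contains the field of fractions K of Z[Q_a(u)^{+-1}] exactly when
  the family Q_a(u) (1<=a<=n, u complex) is algebraically independent over Z in 'a:
  the evaluation map Z[X_{a,u}] -> 'a is injective.  Polynomials are given by
  finitely supported integer coefficient functions on finitely supported exponent vectors.\<close>
definition alg_indep_Q :: "nat \<Rightarrow> (nat \<Rightarrow> complex \<Rightarrow> 'a::field) \<Rightarrow> bool" where
  "alg_indep_Q n Q \<longleftrightarrow>
     (\<forall>c :: (nat \<times> complex \<Rightarrow> nat) \<Rightarrow> int.
        finite {e. c e \<noteq> 0} \<longrightarrow>
        (\<forall>e. c e \<noteq> 0 \<longrightarrow> finite {x. e x \<noteq> 0} \<and> {x. e x \<noteq> 0} \<subseteq> {1..n} \<times> UNIV) \<longrightarrow>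
        (\<Sum>e\<in>{e. c e \<noteq> 0}. of_int (c e) * (\<Prod>x\<in>{x. e x \<noteq> 0}. Q (fst x) (snd x) ^ e x)) = 0 \<longrightarrow>
        (\<forall>e. c e = 0))"

definition dd :: "nat \<Rightarrow> nat \<Rightarrow> complex" where
  "dd n a = (if a = n then 2 else 1)"

definition Yf :: "nat \<Rightarrow> (nat \<Rightarrow> complex \<Rightarrow> 'a::field) \<Rightarrow> nat \<Rightarrow> complex \<Rightarrow> 'a" where
  "Yf n Q a u = (if a = 0 then 1 else Q a (u - dd n a / 2) / Q a (u + dd n a / 2))"

definition zU :: "nat \<Rightarrow> (nat \<Rightarrow> complex \<Rightarrow> 'a::field) \<Rightarrow> nat \<Rightarrow> complex \<Rightarrow> 'a" where
  "zU n Q a u = Yf n Q a (u + of_nat a / 2) / Yf n Q (a - 1) (u + (of_nat a + 1) / 2)"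

definition zB :: "nat \<Rightarrow> (nat \<Rightarrow> complex \<Rightarrow> 'a::field) \<Rightarrow> nat \<Rightarrow> complex \<Rightarrow> 'a" where
  "zB n Q a u = Yf n Q (a - 1) (u + (2 * of_nat n - of_nat a + 3) / 2)
                / Yf n Q a (u + (2 * of_nat n - of_nat a + 4) / 2)"

text \<open>The ordered alphabet J = {1 < ... < n < bar n < ... < bar 1} is encoded by positions
  1..2n: position p <= n is the letter p, position p > n is the letter bar (2n+1-p).\<close>
definition zJ :: "nat \<Rightarrow> (nat \<Rightarrow> complex \<Rightarrow> 'a::field) \<Rightarrow> nat \<Rightarrow> complex \<Rightarrow> 'a" where
  "zJ n Q p u = (if p \<le> n then zU n Q p u else zB n Q (2 * n + 1 - p) u)"

definition xX :: "nat \<Rightarrow> (nat \<Rightarrow> complex \<Rightarrow> 'a::field) \<Rightarrow> complex \<Rightarrow> 'a" where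
  "xX n Q u = Q n (u + of_nat n / 2) * Q n (u + (of_nat n + 4) / 2) / (Q n (u + (of_nat n + 2) / 2))^2"

(* x_i for 1 <= i <= N = 2n+2 *)
definition xf :: "nat \<Rightarrow> (nat \<Rightarrow> complex \<Rightarrow> 'a::field) \<Rightarrow> nat \<Rightarrow> complex \<Rightarrow> 'a" where
  "xf n Q i u = (if i \<le> n then zU n Q i u
                 else if i = n + 1 then xX n Q u
                 else if i = n + 2 then - xX n Q u
                 else zB n Q (2 * n + 3 - i) u)"

definition Lfactor :: "nat \<Rightarrow> (nat \<Rightarrow> complex \<Rightarrow> 'a::field) \<Rightarrow> nat \<Rightarrow> (complex \<Rightarrow> 'a) \<Rightarrow> complex \<Rightarrow> 'a" where
  "Lfactor n Q i f u = xf n Q i (u + of_int (int n + 1 - int i)) * f u - f (u + 1)"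

text \<open>L(u) = prod_{i=1..N} (x_i(u+n+1-i) - D), factor 1 leftmost (applied last).\<close>
definition Lop :: "nat \<Rightarrow> (nat \<Rightarrow> complex \<Rightarrow> 'a::field) \<Rightarrow> (complex \<Rightarrow> 'a) \<Rightarrow> complex \<Rightarrow> 'a" where
  "Lop n Q w = foldr (Lfactor n Q) [1..<2 * n + 3] w"

definition admT :: "nat \<Rightarrow> nat \<Rightarrow> nat list set" where
  "admT n a = {is. length is = a \<and> sorted_wrt (<) is \<and> set is \<subseteq> {1..2 * n} \<and>
      (\<forall>k<a. \<forall>l<a. is ! k \<le> n \<and> is ! l = 2 * n + 1 - is ! k \<longrightarrow>
          int n + int k - int l \<ge> int (is ! k))}"

(* T^(a)_1(v) for 1 <= a <= n, with v = u + 1/2 *)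
definition Tbase :: "nat \<Rightarrow> (nat \<Rightarrow> complex \<Rightarrow> 'a::field) \<Rightarrow> nat \<Rightarrow> complex \<Rightarrow> 'a" where
  "Tbase n Q a v = (\<Sum>is\<in>admT n a. \<Prod>j<a.
       zJ n Q (is ! j) (v - 1 / 2 + of_int (int a + 1 - 2 * (int j + 1)) / 2))"

definition Tf :: "nat \<Rightarrow> (nat \<Rightarrow> complex \<Rightarrow> 'a::field) \<Rightarrow> int \<Rightarrow> complex \<Rightarrow> 'a" where
  "Tf n Q a v =
     (if a < 0 then 0
      else if a = 0 then 1
      else if a \<le> int n then Tbase n Q (nat a) v
      else if a = int n + 1 then 0
      else if a < 2 * int n + 2 then - Tbase n Q (nat (2 * int n + 2 - a)) v
      else if a = 2 * int n + 2 then -1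
      else 0)"

text \<open>H^(i)_k(v), with N - 1 = 2n+1 and N + 1 = 2n+3.\<close>
fun Hf :: "nat \<Rightarrow> (nat \<Rightarrow> complex \<Rightarrow> 'a::field) \<Rightarrow> nat \<Rightarrow> nat \<Rightarrow> complex \<Rightarrow> 'a" where
  "Hf n Q i 0 v = (if i = 0 then 1 else 0)"
| "Hf n Q i (Suc k) v =
     - Tf n Q (int i) v * Hf n Q (2 * n + 1) k (v + (of_nat (2 * n + 3) - of_nat i) / 2)
     - (if i = 0 then 0 else Hf n Q (i - 1) k (v + 1 / 2))"

definition casorati :: "(nat \<Rightarrow> complex \<Rightarrow> 'a::field) \<Rightarrow> int list \<Rightarrow> complex \<Rightarrow> 'a" where
  "casorati w is u = det (mat (length is) (length is)
       (\<lambda>(r, s). w (r + 1) (u + of_int (is ! s))))"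

end

theory Submission
  imports Defs
begin

text \<open>Group the \<open>N\<close> first-order factors of \<open>L\<close> from the middle outwards. Viewed for an
  arbitrary family of \<open>Y\<close>-functions, the group of rank \<open>m+1\<close> consists of the two factors
  carrying the boxes \<open>1\<close> and \<open>bar 1\<close> around the group of rank \<open>m\<close> for the shifted family
  \<open>Y_(a+1)(. + 1/2)\<close>. Removing the letters \<open>1\<close> and \<open>bar 1\<close> from the tableaux that define
  \<open>T^(a)\<close> gives the same recursion for the tableau sums, and the two central factors
  contribute \<open>D^2 - x_(n+1)(u) x_(n+1)(u-1)\<close>, a ratio of \<open>Y_n\<close>'s. With the reflection
  \<open>T^(a) = -T^(N-a)\<close> this yields \<open>L(u) = - (\<Sum>j\<le>N. (-1)^j T^(j)(u+j/2) D^j)\<close>.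

  So every solution satisfies \<open>w(u+N) = (\<Sum>j<N. (-1)^j T^(j)(u+j/2) w(u+j))\<close>, and the
  recursion defining \<open>H\<close> is exactly one step in iterating this to
  \<open>w(u+k) = (\<Sum>i<N. (-1)^i H^(i)_k(u+i/2) w(u+i))\<close>; Cramer's rule for \<open>N\<close> solutions with
  non-vanishing Casorati determinant gives (ii). Part (i) does not involve \<open>L\<close>: for
  \<open>k < N\<close> it follows from the recursion, and for \<open>k \<ge> N\<close> the recursion is the Laplace
  expansion of the determinant along its first column.\<close>

section \<open>Admissible tableaux\<close>

lemma strict_sorted_nth_less_iff:
  assumes "sorted_wrt (<) (xs :: 'a::linorder list)" "j < length xs" "k < length xs"
  shows "xs ! j < xs ! k \<longleftrightarrow> j < k"
  using assms by (metis linorder_neqE_nat sorted_wrt_nth_less order.asym order.irrefl)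

lemma card_less_nth_strict_sorted:
  assumes s: "sorted_wrt (<) (xs :: 'a::linorder list)" and k: "k < length xs"
  shows "card {y \<in> set xs. y < xs ! k} = k"
proof -
  have "{y \<in> set xs. y < xs ! k} = (!) xs ` {..<k}"
  proof
    show "{y \<in> set xs. y < xs ! k} \<subseteq> (!) xs ` {..<k}"
      using strict_sorted_nth_less_iff[OF s _ k] by (auto simp: in_set_conv_nth)
    show "(!) xs ` {..<k} \<subseteq> {y \<in> set xs. y < xs ! k}"
      using strict_sorted_nth_less_iff[OF s _ k] k by auto
  qed
  moreover have "inj_on ((!) xs) {..<k}"
    using s k by (auto simp: inj_on_def nth_eq_iff_index_eq strict_sorted_iff)
  ultimately show ?thesis by (simp add: card_image)
qed

lemma card_between_nth_strict_sorted:
  assumes s: "sorted_wrt (<) (xs :: 'a::linorder list)"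
    and kl: "k < length xs" "l < length xs" "xs!k < xs!l"
  shows "card {y\<in>set xs. xs!k \<le> y \<and> y < xs!l} = l - k"
proof -
  have "{y\<in>set xs. xs!k \<le> y \<and> y < xs!l} = {y\<in>set xs. y < xs!l} - {y\<in>set xs. y < xs!k}"
    by auto
  moreover have "card ({y\<in>set xs. y < xs!l} - {y\<in>set xs. y < xs!k})
      = card {y\<in>set xs. y < xs!l} - card {y\<in>set xs. y < xs!k}"
    by (rule card_Diff_subset) (use kl in auto)
  ultimately show ?thesis using card_less_nth_strict_sorted[OF s] kl by simp
qed

text \<open>If a strictly increasing tableau has \<open>c\<close> at position \<open>k\<close> and \<open>bar c = 2M+1-c\<close>
  at position \<open>l\<close>, then \<open>l - k\<close> is the number of its entries in \<open>[c, bar c)\<close>; this turns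
  the condition of \<^const>\<open>admT\<close> into a condition on the set of entries.\<close>
definition admissible :: "nat \<Rightarrow> nat set \<Rightarrow> bool" where
  "admissible M S \<longleftrightarrow> (\<forall>c\<in>S. c \<le> M \<longrightarrow> 2*M+1-c \<in> S \<longrightarrow>
      card {y\<in>S. c \<le> y \<and> y < 2*M+1-c} \<le> M - c)"

lemma admT_condition_iff_admissible:
  assumes s: "sorted_wrt (<) (xs :: nat list)" and r: "set xs \<subseteq> {1..2*M}"
  shows "(\<forall>k<length xs. \<forall>l<length xs. xs!k \<le> M \<and> xs!l = 2*M+1-xs!k \<longrightarrow>
            int M + int k - int l \<ge> int (xs!k))
     \<longleftrightarrow> admissible M (set xs)"
proof -
  note gap = card_between_nth_strict_sorted[OF s]
  show ?thesis
  proof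
    assume A: "\<forall>k<length xs. \<forall>l<length xs. xs!k \<le> M \<and> xs!l = 2*M+1-xs!k \<longrightarrow>
                 int M + int k - int l \<ge> int (xs!k)"
    show "admissible M (set xs)" unfolding admissible_def
    proof (intro ballI impI)
      fix c assume c: "c \<in> set xs" "c \<le> M" "2*M+1-c \<in> set xs"
      obtain k where k: "k < length xs" "xs!k = c" using c by (auto simp: in_set_conv_nth)
      obtain l where l: "l < length xs" "xs!l = 2*M+1-c" using c by (auto simp: in_set_conv_nth)
      have "c \<ge> 1" using c r by auto
      then have "xs!k < xs!l" using k l c by auto
      then have "card {y\<in>set xs. c \<le> y \<and> y < 2*M+1-c} = l - k"
        using gap[OF k(1) l(1)] k(2) l(2) by simp
      moreover have "int M + int k - int l \<ge> int c" using A k l c by auto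
      ultimately show "card {y\<in>set xs. c \<le> y \<and> y < 2*M+1-c} \<le> M - c" by linarith
    qed
  next
    assume A: "admissible M (set xs)"
    show "\<forall>k<length xs. \<forall>l<length xs. xs!k \<le> M \<and> xs!l = 2*M+1-xs!k \<longrightarrow>
            int M + int k - int l \<ge> int (xs!k)"
    proof (intro allI impI)
      fix k l assume kl: "k < length xs" "l < length xs" "xs!k \<le> M \<and> xs!l = 2*M+1-xs!k"
      have "xs!k \<ge> 1" using kl r nth_mem by fastforce
      then have lt: "xs!k < xs!l" using kl by auto
      then have "k < l" using strict_sorted_nth_less_iff[OF s kl(1,2)] by simp
      have "xs!k \<in> set xs" "2*M+1-xs!k \<in> set xs" using kl nth_mem by metis+
      then have "card {y\<in>set xs. xs!k \<le> y \<and> y < 2*M+1-xs!k} \<le> M - xs!k"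
        using A kl unfolding admissible_def by blast
      then have "l - k \<le> M - xs!k" using gap[OF kl(1,2) lt] kl by simp
      then show "int M + int k - int l \<ge> int (xs!k)" using kl \<open>k < l\<close> by linarith
    qed
  qed
qed

lemma admT_eq:
  "admT M a = {xs. length xs = a \<and> sorted_wrt (<) xs \<and> set xs \<subseteq> {1..2*M} \<and> admissible M (set xs)}"
  unfolding admT_def using admT_condition_iff_admissible by blast

lemma admT_D: "xs \<in> admT m a \<Longrightarrow> set xs \<subseteq> {1..2*m} \<and> length xs = a"
  unfolding admT_def by auto

lemma finite_admT: "finite (admT m a)"
proof (rule finite_subset)
  show "admT m a \<subseteq> {xs. set xs \<subseteq> {1..2*m} \<and> length xs = a}" using admT_D by blast
qed (rule finite_lists_length_eq, simp)

lemma admT_0: "admT m 0 = {[]}"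
  unfolding admT_def by auto

text \<open>A tableau of rank \<open>m\<close> becomes one of rank \<open>m+1\<close> by renaming each letter \<open>p\<close> to
  \<open>p+1\<close>; the new letters \<open>1\<close> and \<open>bar 1\<close> (encoded by \<open>2(m+1)\<close>) may be added.\<close>
definition lift_set :: "nat \<Rightarrow> bool \<Rightarrow> bool \<Rightarrow> nat set \<Rightarrow> nat set" where
  "lift_set M x y T = (if x then {1} else {}) \<union> Suc ` T \<union> (if y then {2*M} else {})"

definition lift_tab :: "nat \<Rightarrow> bool \<Rightarrow> bool \<Rightarrow> nat list \<Rightarrow> nat list" where
  "lift_tab M x y js = (if x then [1] else []) @ map Suc js @ (if y then [2*M] else [])"

lemma set_lift_tab: "set (lift_tab M x y js) = lift_set M x y (set js)"
  by (auto simp: lift_tab_def lift_set_def)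

lemma length_lift_tab:
  "length (lift_tab M x y js) = length js + (if x then 1 else 0) + (if y then 1 else 0)"
  by (auto simp: lift_tab_def)

lemma sorted_lift_tab:
  "sorted_wrt (<) js \<Longrightarrow> set js \<subseteq> {1..2*m} \<Longrightarrow> sorted_wrt (<) (lift_tab (Suc m) x y js)"
  unfolding lift_tab_def by (auto simp: sorted_wrt_append sorted_wrt_map)

lemma inj_lift_tab: "inj_on (lift_tab M x y) A"
  by (rule inj_onI) (auto simp: lift_tab_def)

lemma lift_set_eq_strip:
  assumes "S \<subseteq> {1..2*M}"
  shows "S = lift_set M (1 \<in> S) (2*M \<in> S) ((\<lambda>v. v - 1) ` (S - {1, 2*M}))"
proof
  show "S \<subseteq> lift_set M (1 \<in> S) (2*M \<in> S) ((\<lambda>v. v - 1) ` (S - {1, 2*M}))"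
  proof
    fix v assume v: "v \<in> S"
    show "v \<in> lift_set M (1 \<in> S) (2*M \<in> S) ((\<lambda>v. v - 1) ` (S - {1, 2*M}))"
    proof (cases "v = 1 \<or> v = 2*M")
      case True
      then show ?thesis using v by (auto simp: lift_set_def)
    next
      case False
      then have "v - 1 \<in> (\<lambda>v. v - 1) ` (S - {1, 2*M})" using v by auto
      moreover have "v = Suc (v - 1)" using v assms by force
      ultimately show ?thesis unfolding lift_set_def by (metis UnI1 UnI2 image_eqI)
    qed
  qed
  show "lift_set M (1 \<in> S) (2*M \<in> S) ((\<lambda>v. v - 1) ` (S - {1, 2*M})) \<subseteq> S"
    using assms by (auto simp: lift_set_def Suc_diff_le)
qed

lemma lift_set_inner_interval:
  assumes "T \<subseteq> {1..2*m}" "1 \<le> c" "c \<le> m"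
  shows "{v\<in>lift_set (Suc m) x y T. Suc c \<le> v \<and> v < 2*Suc m+1-Suc c}
       = Suc ` {v\<in>T. c \<le> v \<and> v < 2*m+1-c}"
  using assms by (auto simp: lift_set_def)

lemma admissible_iff_lift_set:
  assumes T: "T \<subseteq> {1..2*m}"
  shows "admissible m T \<longleftrightarrow>
    (\<forall>c\<in>lift_set (Suc m) x y T. c \<noteq> 1 \<longrightarrow> c \<le> Suc m \<longrightarrow> 2*Suc m+1-c \<in> lift_set (Suc m) x y T \<longrightarrow>
       card {v\<in>lift_set (Suc m) x y T. c \<le> v \<and> v < 2*Suc m+1-c} \<le> Suc m - c)"
    (is "_ \<longleftrightarrow> (\<forall>c\<in>?S. ?P c)")
proof -
  have memS: "Suc c \<in> ?S \<longleftrightarrow> c \<in> T" if "1 \<le> c" "c \<le> 2*m" for c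
    using that by (auto simp: lift_set_def)
  have cardS: "card {v\<in>?S. Suc c \<le> v \<and> v < 2*Suc m+1-Suc c} = card {v\<in>T. c \<le> v \<and> v < 2*m+1-c}"
    if "1 \<le> c" "c \<le> m" for c
    using lift_set_inner_interval[OF T that] by (simp add: card_image)
  have "?P (Suc c) \<longleftrightarrow> (c \<le> m \<longrightarrow> 2*m+1-c \<in> T \<longrightarrow> card {v\<in>T. c \<le> v \<and> v < 2*m+1-c} \<le> m - c)"
    if "c \<in> T" for c
  proof -
    have "1 \<le> c" "c \<le> 2*m" using that T by auto
    then show ?thesis using memS[of "2*m+1-c"] cardS[of c] by (auto simp: Suc_diff_le)
  qed
  moreover have "(\<forall>c\<in>?S. ?P c) \<longleftrightarrow> (\<forall>c\<in>T. ?P (Suc c))"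
    using T by (auto simp: lift_set_def)
  ultimately show ?thesis unfolding admissible_def by auto
qed

lemma admissible_lift_set_iff:
  assumes T: "T \<subseteq> {1..2*m}" and fT: "finite T"
  shows "admissible (Suc m) (lift_set (Suc m) x y T)
     \<longleftrightarrow> admissible m T \<and> (x \<and> y \<longrightarrow> card T + 2 \<le> Suc m)"
proof -
  let ?S = "lift_set (Suc m) x y T"
  have "card {v\<in>?S. 1 \<le> v \<and> v < 2*Suc m+1-1} = card T + 1" if "x" "y"
  proof -
    have "{v\<in>?S. 1 \<le> v \<and> v < 2*Suc m+1-1} = insert 1 (Suc ` T)"
      using that T by (auto simp: lift_set_def)
    moreover have "1 \<notin> Suc ` T" using T by auto
    ultimately show ?thesis using fT by (simp add: card_image)
  qed
  moreover have "1 \<in> ?S \<longleftrightarrow> x" "2*Suc m \<in> ?S \<longleftrightarrow> y"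
    using T by (auto simp: lift_set_def)
  ultimately have "(1 \<in> ?S \<longrightarrow> 2*Suc m+1-1 \<in> ?S \<longrightarrow> card {v\<in>?S. 1 \<le> v \<and> v < 2*Suc m+1-1} \<le> Suc m - 1)
      \<longleftrightarrow> (x \<and> y \<longrightarrow> card T + 2 \<le> Suc m)"
    by auto
  then show ?thesis
    unfolding admissible_iff_lift_set[OF T, of x y] admissible_def[of "Suc m"] by auto
qed

lemma lift_tab_in_admT:
  assumes js: "js \<in> admT m b" and xy: "x \<and> y \<longrightarrow> b + 2 \<le> Suc m"
  shows "lift_tab (Suc m) x y js \<in> admT (Suc m) (b + (if x then 1 else 0) + (if y then 1 else 0))"
proof -
  have j: "length js = b" "sorted_wrt (<) js" "set js \<subseteq> {1..2*m}" "admissible m (set js)"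
    using js by (auto simp: admT_eq)
  then have "card (set js) = b" by (metis distinct_card strict_sorted_iff)
  then have "admissible (Suc m) (lift_set (Suc m) x y (set js))"
    using admissible_lift_set_iff[OF j(3)] j xy by simp
  then show ?thesis using j sorted_lift_tab[OF j(2,3)] length_lift_tab[of "Suc m" x y js]
    by (auto simp: admT_eq set_lift_tab lift_set_def)
qed

lemma admT_Suc_lift_tab_cases:
  assumes "xs \<in> admT (Suc m) a"
  obtains x y js where "xs = lift_tab (Suc m) x y js" "js \<in> admT m (length js)"
    "x \<and> y \<longrightarrow> length js + 2 \<le> Suc m"
proof -
  have xs: "sorted_wrt (<) xs" "set xs \<subseteq> {1..2*Suc m}" "admissible (Suc m) (set xs)"
    using assms by (auto simp: admT_eq)
  define T where "T = (\<lambda>v. v - 1) ` (set xs - {1, 2*Suc m})"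
  have T: "T \<subseteq> {1..2*m}" using xs unfolding T_def by force
  define js where "js = sorted_list_of_set T"
  have js: "sorted_wrt (<) js" "set js = T" "card T = length js"
    using T unfolding js_def by (auto simp: finite_subset)
  have S: "set xs = lift_set (Suc m) (1 \<in> set xs) (2*Suc m \<in> set xs) T"
    unfolding T_def by (rule lift_set_eq_strip[OF xs(2)])
  have "xs = lift_tab (Suc m) (1 \<in> set xs) (2*Suc m \<in> set xs) js"
    using strict_sorted_equal[OF sorted_lift_tab[OF js(1)] xs(1)] T js S
    by (simp add: set_lift_tab)
  moreover have "admissible m T \<and> (1 \<in> set xs \<and> 2*Suc m \<in> set xs \<longrightarrow> card T + 2 \<le> Suc m)"
    using admissible_lift_set_iff[OF T] T xs(3) S by (metis finite_subset finite_atLeastAtMost)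
  ultimately show ?thesis using that js T by (simp add: admT_eq)
qed

lemma admT_Suc:
  "admT (Suc m) a = lift_tab (Suc m) False False ` admT m a
     \<union> (if 1 \<le> a then lift_tab (Suc m) True False ` admT m (a-1) else {})
     \<union> (if 1 \<le> a then lift_tab (Suc m) False True ` admT m (a-1) else {})
     \<union> (if 2 \<le> a \<and> a \<le> Suc m then lift_tab (Suc m) True True ` admT m (a-2) else {})"
  (is "?L = ?R")
proof
  show "?R \<subseteq> ?L"
  proof -
    have lift: "lift_tab (Suc m) x y ` admT m b \<subseteq> ?L"
      if "a = b + (if x then 1 else 0) + (if y then 1 else 0)" "x \<and> y \<longrightarrow> b + 2 \<le> Suc m"
      for x y b
      using lift_tab_in_admT[of _ m b x y] that by auto
    have "lift_tab (Suc m) False False ` admT m a \<subseteq> ?L" by (rule lift) simp_all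
    moreover have "lift_tab (Suc m) True False ` admT m (a-1) \<subseteq> ?L" if "1 \<le> a"
      using that by (intro lift) auto
    moreover have "lift_tab (Suc m) False True ` admT m (a-1) \<subseteq> ?L" if "1 \<le> a"
      using that by (intro lift) auto
    moreover have "lift_tab (Suc m) True True ` admT m (a-2) \<subseteq> ?L" if "2 \<le> a" "a \<le> Suc m"
      using that by (intro lift) auto
    ultimately show ?thesis by auto
  qed
  show "?L \<subseteq> ?R"
  proof
    fix xs assume xs: "xs \<in> ?L"
    then obtain x y js where js: "xs = lift_tab (Suc m) x y js" "js \<in> admT m (length js)"
      "x \<and> y \<longrightarrow> length js + 2 \<le> Suc m"
      by (rule admT_Suc_lift_tab_cases)
    have "a = length js + (if x then 1 else 0) + (if y then 1 else 0)"
      using xs js(1) admT_D length_lift_tab by metis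
    then show "xs \<in> ?R" using js by (cases x; cases y) auto
  qed
qed

section \<open>Tableau sums for an arbitrary family of Y-functions\<close>

text \<open>The box variables \<^const>\<open>zU\<close>, \<^const>\<open>zB\<close> of rank \<open>m\<close>, indexed by positions
  \<open>p \<in> {1..2m}\<close> as in \<^const>\<open>zJ\<close>, with \<^const>\<open>Yf\<close> replaced by an arbitrary family \<open>Ys\<close>.\<close>
definition zbox :: "nat \<Rightarrow> (nat \<Rightarrow> complex \<Rightarrow> 'a::field) \<Rightarrow> nat \<Rightarrow> complex \<Rightarrow> 'a" where
  "zbox m Ys p u = (if p \<le> m then Ys p (u + of_nat p / 2) / Ys (p - 1) (u + (of_nat p + 1) / 2)
      else Ys (2*m - p) (u + (of_nat p + 2) / 2) / Ys (2*m + 1 - p) (u + (of_nat p + 3) / 2))"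

definition shiftY :: "(nat \<Rightarrow> complex \<Rightarrow> 'a) \<Rightarrow> nat \<Rightarrow> complex \<Rightarrow> 'a" where
  "shiftY Ys b v = Ys (Suc b) (v + 1/2)"

primrec tab_weight :: "nat \<Rightarrow> (nat \<Rightarrow> complex \<Rightarrow> 'a::field) \<Rightarrow> nat list \<Rightarrow> complex \<Rightarrow> 'a" where
  "tab_weight m Ys [] u = 1"
| "tab_weight m Ys (p # xs) u = zbox m Ys p (u + of_nat m) * tab_weight m Ys xs (u - 1)"

definition Tsum :: "nat \<Rightarrow> (nat \<Rightarrow> complex \<Rightarrow> 'a::field) \<Rightarrow> int \<Rightarrow> complex \<Rightarrow> 'a" where
  "Tsum m Ys a u = (if a < 0 then 0 else (\<Sum>xs\<in>admT m (nat a). tab_weight m Ys xs u))"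

lemma quotient_args_cong:
  "i = i' \<Longrightarrow> x = x' \<Longrightarrow> j = j' \<Longrightarrow> y = y' \<Longrightarrow> (F :: 'b \<Rightarrow> 'c \<Rightarrow> 'a::field) i x / F j y = F i' x' / F j' y'"
  by simp

lemma zbox_Suc:
  assumes "1 \<le> p" "p \<le> 2*m"
  shows "zbox (Suc m) Ys (Suc p) u = zbox m (shiftY Ys) p u"
proof (cases "p \<le> m")
  case True
  then show ?thesis
    unfolding zbox_def shiftY_def using assms
    by simp (intro quotient_args_cong; simp add: field_simps)
next
  case False
  have "2 * Suc m - Suc p = Suc (2*m - p)" "2 * Suc m + 1 - Suc p = Suc (2*m + 1 - p)"
    using assms by simp_all
  then show ?thesis
    unfolding zbox_def shiftY_def using False
    by simp (intro quotient_args_cong; simp add: field_simps)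
qed

lemma zbox_first: "zbox (Suc m) Ys 1 v = Ys 1 (v + 1/2) / Ys 0 (v + 1)"
  unfolding zbox_def by simp

lemma zbox_last: "zbox (Suc m) Ys (2 * Suc m) v = Ys 0 (v + of_nat m + 2) / Ys 1 (v + of_nat m + 5/2)"
  unfolding zbox_def by simp (intro quotient_args_cong; simp add: field_simps)

lemma tab_weight_eq_prod:
  "tab_weight m Ys xs u = (\<Prod>k<length xs. zbox m Ys (xs!k) (u + of_nat m - of_nat k))"
  by (induction xs arbitrary: u) (simp_all add: prod.lessThan_Suc_shift algebra_simps del: prod.lessThan_Suc)

lemma tab_weight_append:
  "tab_weight m Ys (xs @ [p]) u = tab_weight m Ys xs u * zbox m Ys p (u + of_nat m - of_nat (length xs))"
  by (induction xs arbitrary: u) (simp_all add: algebra_simps)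

lemma tab_weight_map_Suc:
  "set js \<subseteq> {1..2*m} \<Longrightarrow> tab_weight (Suc m) Ys (map Suc js) u = tab_weight m (shiftY Ys) js (u + 1)"
  by (induction js arbitrary: u) (simp_all add: zbox_Suc algebra_simps)

lemma tab_weight_lift_tab:
  assumes "set js \<subseteq> {1..2*m}"
  shows "tab_weight (Suc m) Ys (lift_tab (Suc m) x y js) u =
     (if x then zbox (Suc m) Ys 1 (u + of_nat (Suc m)) else 1)
     * tab_weight m (shiftY Ys) js (if x then u else u + 1)
     * (if y then zbox (Suc m) Ys (2 * Suc m)
          (u + of_nat (Suc m) + 1 - of_nat (length (lift_tab (Suc m) x y js))) else 1)"
  using assms
  by (cases x; cases y) (simp_all add: lift_tab_def tab_weight_append tab_weight_map_Suc algebra_simps)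

lemma sum_tab_weight_lift_tab:
  "(\<Sum>xs\<in>lift_tab (Suc m) x y ` admT m b. tab_weight (Suc m) Ys xs u) =
     (if x then zbox (Suc m) Ys 1 (u + of_nat (Suc m)) else 1)
     * Tsum m (shiftY Ys) (int b) (if x then u else u + 1)
     * (if y then zbox (Suc m) Ys (2 * Suc m)
          (u + of_nat (Suc m) + 1 - of_nat (b + (if x then 1 else 0) + 1)) else 1)"
proof -
  have "(\<Sum>xs\<in>lift_tab (Suc m) x y ` admT m b. tab_weight (Suc m) Ys xs u)
      = (\<Sum>js\<in>admT m b. tab_weight (Suc m) Ys (lift_tab (Suc m) x y js) u)"
    by (simp add: sum.reindex[OF inj_lift_tab])
  also have "\<dots> = (\<Sum>js\<in>admT m b. (if x then zbox (Suc m) Ys 1 (u + of_nat (Suc m)) else 1)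
     * tab_weight m (shiftY Ys) js (if x then u else u + 1)
     * (if y then zbox (Suc m) Ys (2 * Suc m)
          (u + of_nat (Suc m) + 1 - of_nat (b + (if x then 1 else 0) + 1)) else 1))"
    by (rule sum.cong[OF refl])
      (use admT_D in \<open>auto simp: tab_weight_lift_tab length_lift_tab\<close>)
  finally show ?thesis by (simp add: Tsum_def sum_distrib_left sum_distrib_right)
qed

lemma lift_tab_images_disjoint:
  assumes "(x, y) \<noteq> (x', y')"
  shows "lift_tab (Suc m) x y ` admT m b \<inter> lift_tab (Suc m) x' y' ` admT m b' = {}"
proof -
  have flags: "(1 \<in> set (lift_tab (Suc m) x y js) \<longleftrightarrow> x) \<and> (2*Suc m \<in> set (lift_tab (Suc m) x y js) \<longleftrightarrow> y)"
    if "js \<in> admT m c" for js c x y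
    using admT_D[OF that] by (auto simp: lift_tab_def)
  show ?thesis
  proof (rule ccontr)
    assume "lift_tab (Suc m) x y ` admT m b \<inter> lift_tab (Suc m) x' y' ` admT m b' \<noteq> {}"
    then obtain v js js' where "js \<in> admT m b" "js' \<in> admT m b'"
      "v = lift_tab (Suc m) x y js" "v = lift_tab (Suc m) x' y' js'"
      by blast
    then have "x = x' \<and> y = y'" using flags[of js b x y] flags[of js' b' x' y'] by simp
    then show False using assms by simp
  qed
qed

lemma Tsum_Suc:
  fixes Ys :: "nat \<Rightarrow> complex \<Rightarrow> 'a::field" and m a :: nat and u :: complex
  defines "z1 \<equiv> zbox (Suc m) Ys 1 (u + of_nat (Suc m))"
    and "zb \<equiv> zbox (Suc m) Ys (2 * Suc m) (u + of_nat (Suc m) + 1 - of_nat a)"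
  shows "Tsum (Suc m) Ys (int a) u = Tsum m (shiftY Ys) (int a) (u+1)
     + z1 * Tsum m (shiftY Ys) (int a - 1) u + Tsum m (shiftY Ys) (int a - 1) (u+1) * zb
     + (if a \<le> Suc m then z1 * Tsum m (shiftY Ys) (int a - 2) u * zb else 0)"
proof -
  let ?w = "\<lambda>xs. tab_weight (Suc m) Ys xs u"
  let ?Y = "shiftY Ys"
  define A0 where "A0 = lift_tab (Suc m) False False ` admT m a"
  define A1 where "A1 = (if 1 \<le> a then lift_tab (Suc m) True False ` admT m (a-1) else {})"
  define A2 where "A2 = (if 1 \<le> a then lift_tab (Suc m) False True ` admT m (a-1) else {})"
  define A3 where "A3 = (if 2 \<le> a \<and> a \<le> Suc m then lift_tab (Suc m) True True ` admT m (a-2) else {})"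
  have fin: "finite A0" "finite A1" "finite A2" "finite A3"
    unfolding A0_def A1_def A2_def A3_def using finite_admT by auto
  have "A0 \<inter> A1 = {}" "A0 \<inter> A2 = {}" "A0 \<inter> A3 = {}" "A1 \<inter> A2 = {}" "A1 \<inter> A3 = {}" "A2 \<inter> A3 = {}"
    unfolding A0_def A1_def A2_def A3_def by (simp_all add: lift_tab_images_disjoint)
  moreover have "admT (Suc m) a = A0 \<union> A1 \<union> A2 \<union> A3"
    unfolding A0_def A1_def A2_def A3_def by (rule admT_Suc)
  ultimately have "Tsum (Suc m) Ys (int a) u = sum ?w A0 + sum ?w A1 + sum ?w A2 + sum ?w A3"
    using fin by (simp add: Tsum_def sum.union_disjoint Int_Un_distrib Int_Un_distrib2)
  moreover have "sum ?w A0 = Tsum m ?Y (int a) (u+1)"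
    unfolding A0_def sum_tab_weight_lift_tab by simp
  moreover have "sum ?w A1 = z1 * Tsum m ?Y (int a - 1) u"
    unfolding A1_def z1_def by (simp add: sum_tab_weight_lift_tab of_nat_diff Tsum_def)
  moreover have "sum ?w A2 = Tsum m ?Y (int a - 1) (u+1) * zb"
    unfolding A2_def zb_def by (simp add: sum_tab_weight_lift_tab of_nat_diff Tsum_def)
  moreover have "sum ?w A3 = (if a \<le> Suc m then z1 * Tsum m ?Y (int a - 2) u * zb else 0)"
    unfolding A3_def z1_def zb_def
    by (auto simp: sum_tab_weight_lift_tab of_nat_diff Tsum_def)
  ultimately show ?thesis by simp
qed

lemma Tsum_neg: "a < 0 \<Longrightarrow> Tsum m Ys a u = 0"
  unfolding Tsum_def by simp

lemma Tsum_0: "Tsum m Ys 0 u = 1"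
  unfolding Tsum_def by (simp add: admT_0)

lemma Tsum_above: "int m < a \<Longrightarrow> Tsum m Ys a u = 0"
proof (induction m arbitrary: Ys u a)
  case 0
  then have "admT 0 (nat a) = {}" unfolding admT_def by auto
  then show ?case unfolding Tsum_def by simp
next
  case (Suc m)
  obtain k where k: "a = int k"
    using Suc.prems by (metis le_less nonneg_int_cases of_nat_0_le_iff order_trans)
  have "Tsum m (shiftY Ys) (int k) (u+1) = 0" "Tsum m (shiftY Ys) (int k - 1) v = 0" "\<not> k \<le> Suc m" for v
    using Suc k by simp_all
  then show ?case unfolding k by (simp add: Tsum_Suc)
qed

text \<open>Beyond \<open>a = m\<close> the tableau sums are continued by the reflection \<open>a \<mapsto> 2m+2-a\<close>; for
  the family \<^term>\<open>Yf n Q\<close> one has \<open>Ys 0 = 1\<close>, and this is the relation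
  \<open>T^(a) = -T^(N-a)\<close>.\<close>
definition Lcoef :: "nat \<Rightarrow> (nat \<Rightarrow> complex \<Rightarrow> 'a::field) \<Rightarrow> int \<Rightarrow> complex \<Rightarrow> 'a" where
  "Lcoef m Ys a u = (if a \<le> int m then Tsum m Ys a u
     else - (Ys 0 (u + of_int (2 * int m + 2 - a)) / Ys 0 (u + of_nat m + 1))
          * Tsum m Ys (2 * int m + 2 - a) (u + of_int (2 * int m + 2 - a) - of_nat m - 1))"

lemma Lcoef_low: "a \<le> int m + 1 \<Longrightarrow> Lcoef m Ys a u = Tsum m Ys a u"
  unfolding Lcoef_def by (cases "a \<le> int m") (auto simp: Tsum_above)

lemma Lcoef_out: "a < 0 \<or> a > 2 * int m + 2 \<Longrightarrow> Lcoef m Ys a u = 0"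
  unfolding Lcoef_def by (auto simp: Tsum_neg)

lemma Lcoef_Suc_middle:
  fixes Ys :: "nat \<Rightarrow> complex \<Rightarrow> 'a::field" and m :: nat and u :: complex
  defines "z1 \<equiv> zbox (Suc m) Ys 1 (u + of_nat (Suc m))"
    and "zb \<equiv> zbox (Suc m) Ys (2 * Suc m) (u + of_nat (Suc m) + 1 - of_nat (m + 2))"
  assumes nz: "\<And>b v. b \<le> Suc m \<Longrightarrow> Ys b v \<noteq> 0"
  shows "Lcoef (Suc m) Ys (int (m + 2)) u = Lcoef m (shiftY Ys) (int (m + 2)) (u+1)
     + z1 * Lcoef m (shiftY Ys) (int (m + 2) - 1) u + Lcoef m (shiftY Ys) (int (m + 2) - 1) (u+1) * zb
     + z1 * Lcoef m (shiftY Ys) (int (m + 2) - 2) u * zb"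
proof -
  let ?Y = "shiftY Ys"
  have l: "Lcoef (Suc m) Ys (int (m + 2)) u = 0" by (simp add: Lcoef_low Tsum_above)
  have r1: "Lcoef m ?Y (int (m + 2) - 1) v = 0" for v by (simp add: Lcoef_low Tsum_above)
  have r2: "Lcoef m ?Y (int (m + 2) - 2) u = Tsum m ?Y (int m) u" by (simp add: Lcoef_low)
  have r3: "Lcoef m ?Y (int (m + 2)) (u+1)
      = - (Ys 1 (u + of_nat m + 3/2) / Ys 1 (u + of_nat m + 5/2)) * Tsum m ?Y (int m) u"
    unfolding Lcoef_def shiftY_def by (simp add: algebra_simps)
  have x: "z1 = Ys 1 (u + of_nat m + 3/2) / Ys 0 (u + of_nat m + 2)"
    unfolding z1_def zbox_first by (simp add: algebra_simps)
  have y: "zb = Ys 0 (u + of_nat m + 2) / Ys 1 (u + of_nat m + 5/2)"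
    unfolding zb_def zbox_last by (simp add: algebra_simps)
  have "Ys 1 (u + of_nat m + 5/2) \<noteq> 0" "Ys 0 (u + of_nat m + 2) \<noteq> 0" using nz by auto
  then show ?thesis unfolding l r1 r2 r3 x y by (simp add: field_simps)
qed

lemma Lcoef_Suc_upper:
  fixes Ys :: "nat \<Rightarrow> complex \<Rightarrow> 'a::field" and m a :: nat and u :: complex
  defines "z1 \<equiv> zbox (Suc m) Ys 1 (u + of_nat (Suc m))"
    and "zb \<equiv> zbox (Suc m) Ys (2 * Suc m) (u + of_nat (Suc m) + 1 - of_nat a)"
  assumes nz: "\<And>b v. b \<le> Suc m \<Longrightarrow> Ys b v \<noteq> 0" and a: "m + 3 \<le> a"
  shows "Lcoef (Suc m) Ys (int a) u = Lcoef m (shiftY Ys) (int a) (u+1)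
     + z1 * Lcoef m (shiftY Ys) (int a - 1) u + Lcoef m (shiftY Ys) (int a - 1) (u+1) * zb
     + z1 * Lcoef m (shiftY Ys) (int a - 2) u * zb"
proof -
  let ?Y = "shiftY Ys"
  define b where "b = 2 * int m + 4 - int a"
  have bM: "b \<le> int m + 1" unfolding b_def using a by simp
  define G0 where "G0 = Tsum m ?Y b (u + of_int b - of_nat m - 1)"
  define G1 where "G1 = Tsum m ?Y (b-1) (u + of_int b - of_nat m - 2)"
  define G2 where "G2 = Tsum m ?Y (b-1) (u + of_int b - of_nat m - 1)"
  define G3 where "G3 = Tsum m ?Y (b-2) (u + of_int b - of_nat m - 2)"
  define P0 where "P0 = Ys 0 (u + of_int b)"
  define P1 where "P1 = Ys 0 (u + of_nat m + 2)"
  define Q1 where "Q1 = Ys 1 (u + of_int b - 1/2)"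
  define Q2 where "Q2 = Ys 1 (u + of_int b + 1/2)"
  define Q3 where "Q3 = Ys 1 (u + of_nat m + 3/2)"
  define Q4 where "Q4 = Ys 1 (u + of_nat m + 5/2)"
  have nzs: "P0 \<noteq> 0" "P1 \<noteq> 0" "Q1 \<noteq> 0" "Q2 \<noteq> 0" "Q3 \<noteq> 0" "Q4 \<noteq> 0"
    unfolding P0_def P1_def Q1_def Q2_def Q3_def Q4_def using nz by auto
  have idx: "2 * int m + 2 - int a = b - 2" "2 * int m + 2 - (int a - 1) = b - 1"
    "2 * int m + 2 - (int a - 2) = b" "2 * int (Suc m) + 2 - int a = b" unfolding b_def by auto
  have lhs: "Lcoef (Suc m) Ys (int a) u = - (P0 / P1) * Tsum (Suc m) Ys b (u + of_int b - of_nat m - 2)"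
    unfolding Lcoef_def idx(4) P0_def P1_def using a by (simp add: algebra_simps)
  have c1: "Lcoef m ?Y (int a) (u+1) = - (Q1/Q4) * G3"
    unfolding Lcoef_def idx(1) shiftY_def Q1_def Q4_def G3_def using a by (simp add: algebra_simps)
  have c2: "Lcoef m ?Y (int a - 1) u = - (Q1/Q3) * G1"
    unfolding Lcoef_def idx(2) shiftY_def Q1_def Q3_def G1_def using a by (simp add: algebra_simps)
  have c3: "Lcoef m ?Y (int a - 1) (u+1) = - (Q2/Q4) * G2"
    unfolding Lcoef_def idx(2) shiftY_def Q2_def Q4_def G2_def using a by (simp add: algebra_simps)
  have c4: "Lcoef m ?Y (int a - 2) u = - (Q2/Q3) * G0"
    unfolding Lcoef_def idx(3) shiftY_def Q2_def Q3_def G0_def using a by (simp add: algebra_simps)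
  have x: "z1 = Q3 / P1"
    unfolding z1_def zbox_first Q3_def P1_def by (simp add: algebra_simps)
  have hb: "(of_int b :: complex) = 2 * of_nat m + 4 - of_nat a" unfolding b_def by simp
  have y: "zb = P0 / Q2"
    unfolding zb_def zbox_last P0_def Q2_def
    by (intro quotient_args_cong) (simp_all add: hb algebra_simps)
  show ?thesis
  proof (cases "b < 0")
    case True
    then have "G0 = 0" "G1 = 0" "G2 = 0" "G3 = 0" "Tsum (Suc m) Ys b (u + of_int b - of_nat m - 2) = 0"
      unfolding G0_def G1_def G2_def G3_def by (simp_all add: Tsum_neg)
    then show ?thesis unfolding lhs c1 c2 c3 c4 by simp
  next
    case False
    then obtain nb where nb: "b = int nb" by (metis nonneg_int_cases not_less)
    have Tsum_reflected: "Tsum (Suc m) Ys b (u + of_int b - of_nat m - 2) = G0 + (Q1/P0) * G1 + G2 * (P1/Q4) + (Q1/P0) * G3 * (P1/Q4)"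
    proof -
      define u' where "u' = u + of_int b - of_nat m - 2"
      have "zbox (Suc m) Ys 1 (u' + of_nat (Suc m)) = Q1/P0"
        unfolding zbox_first Q1_def P0_def u'_def by (simp add: algebra_simps)
      moreover have "zbox (Suc m) Ys (2 * Suc m) (u' + of_nat (Suc m) + 1 - of_nat nb) = P1/Q4"
        unfolding zbox_last P1_def Q4_def u'_def using nb by (simp add: algebra_simps)
      moreover have "Tsum m ?Y (int nb) (u'+1) = G0" "Tsum m ?Y (int nb - 1) u' = G1"
        "Tsum m ?Y (int nb - 1) (u'+1) = G2" "Tsum m ?Y (int nb - 2) u' = G3"
        unfolding G0_def G1_def G2_def G3_def u'_def using nb by (simp_all add: algebra_simps)
      ultimately show ?thesis using Tsum_Suc[of m Ys nb u'] nb bM unfolding u'_def by simp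
    qed
    show ?thesis unfolding lhs Tsum_reflected c1 c2 c3 c4 x y using nzs by (simp add: field_simps)
  qed
qed

lemma Lcoef_Suc:
  fixes Ys :: "nat \<Rightarrow> complex \<Rightarrow> 'a::field" and m a :: nat and u :: complex
  defines "z1 \<equiv> zbox (Suc m) Ys 1 (u + of_nat (Suc m))"
    and "zb \<equiv> zbox (Suc m) Ys (2 * Suc m) (u + of_nat (Suc m) + 1 - of_nat a)"
  assumes nz: "\<And>b v. b \<le> Suc m \<Longrightarrow> Ys b v \<noteq> 0"
  shows "Lcoef (Suc m) Ys (int a) u = Lcoef m (shiftY Ys) (int a) (u+1)
     + z1 * Lcoef m (shiftY Ys) (int a - 1) u + Lcoef m (shiftY Ys) (int a - 1) (u+1) * zb
     + z1 * Lcoef m (shiftY Ys) (int a - 2) u * zb"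
proof -
  consider "a \<le> Suc m" | "a = m + 2" | "m + 3 \<le> a" by linarith
  then show ?thesis
  proof cases
    case 1
    then show ?thesis unfolding z1_def zb_def using Tsum_Suc[of m Ys a u] by (simp add: Lcoef_low)
  next
    case 2
    then show ?thesis unfolding z1_def zb_def using Lcoef_Suc_middle[OF nz] by simp
  next
    case 3
    then show ?thesis unfolding z1_def zb_def using Lcoef_Suc_upper[OF nz] by simp
  qed
qed

section \<open>Difference operators\<close>

definition diff_factor :: "(complex \<Rightarrow> 'a::field) \<Rightarrow> (complex \<Rightarrow> 'a) \<Rightarrow> complex \<Rightarrow> 'a" where
  "diff_factor x f u = x u * f u - f (u + 1)"

fun Lgen :: "nat \<Rightarrow> (nat \<Rightarrow> complex \<Rightarrow> 'a::field) \<Rightarrow> (complex \<Rightarrow> 'a) \<Rightarrow> complex \<Rightarrow> 'a" where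
  "Lgen 0 Ys f u = f (u + 2) - Ys 0 u / Ys 0 (u + 1) * f u"
| "Lgen (Suc m) Ys f u = diff_factor (\<lambda>v. zbox (Suc m) Ys 1 (v + of_nat (Suc m)))
      (Lgen m (shiftY Ys) (diff_factor (\<lambda>v. zbox (Suc m) Ys (2 * Suc m) (v - of_nat (Suc m) - 1)) f)) u"

lemma sum_lessThan_eq_shifted:
  fixes F :: "nat \<Rightarrow> 'b::comm_monoid_add"
  assumes "K + d < M" and "\<And>a. a < d \<or> K + d < a \<Longrightarrow> F a = 0"
  shows "(\<Sum>a<M. F a) = (\<Sum>a<K+1. F (a + d))"
proof -
  have "(\<Sum>a<K+1. F (a + d)) = (\<Sum>a\<in>{d..<K+1+d}. F a)"
    using sum.shift_bounds_nat_ivl[of F 0 d "K+1"] by (simp add: lessThan_atLeast0)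
  also have "\<dots> = (\<Sum>a<M. F a)"
    by (rule sum.mono_neutral_left) (use assms in auto)
  finally show ?thesis by (rule sym)
qed

lemma diff_factor_sandwich:
  fixes c :: "int \<Rightarrow> complex \<Rightarrow> 'a::field"
  assumes P: "\<And>g v. P g v = (\<Sum>a<K+1. (-1)^a * c (int a) v * g (v + of_nat K - of_nat a))"
    and cz: "\<And>a v. a < 0 \<or> a > int K \<Longrightarrow> c a v = 0"
  shows "diff_factor x (P (diff_factor y f)) u = (\<Sum>a<K+3. (-1)^a *
     (c (int a) (u+1) + x u * c (int a - 1) u + c (int a - 1) (u+1) * y (u + of_nat K + 2 - of_nat a)
      + x u * c (int a - 2) u * y (u + of_nat K + 2 - of_nat a)) * f (u + of_nat (K+2) - of_nat a))"
proof -
  define F0 where "F0 a = (-1)^a * c (int a) (u+1) * f (u + of_nat (K+2) - of_nat a)" for a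
  define F1 where "F1 a = (-1)^a * x u * c (int a - 1) u * f (u + of_nat (K+2) - of_nat a)" for a
  define F2 where "F2 a = (-1)^a * c (int a - 1) (u+1) * y (u + of_nat K + 2 - of_nat a)
    * f (u + of_nat (K+2) - of_nat a)" for a
  define F3 where "F3 a = (-1)^a * x u * c (int a - 2) u * y (u + of_nat K + 2 - of_nat a)
    * f (u + of_nat (K+2) - of_nat a)" for a
  have "diff_factor x (P (diff_factor y f)) u = (\<Sum>a<K+1. F0 a + F1 (a+1) + F2 (a+1) + F3 (a+2))"
    unfolding diff_factor_def P sum_distrib_left sum_subtractf[symmetric]
    by (rule sum.cong) (simp_all add: F0_def F1_def F2_def F3_def algebra_simps)
  also have "\<dots> = (\<Sum>a<K+3. F0 a) + (\<Sum>a<K+3. F1 a) + (\<Sum>a<K+3. F2 a) + (\<Sum>a<K+3. F3 a)"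
  proof -
    have "(\<Sum>a<K+3. F0 a) = (\<Sum>a<K+1. F0 (a+0))" "(\<Sum>a<K+3. F1 a) = (\<Sum>a<K+1. F1 (a+1))"
      "(\<Sum>a<K+3. F2 a) = (\<Sum>a<K+1. F2 (a+1))" "(\<Sum>a<K+3. F3 a) = (\<Sum>a<K+1. F3 (a+2))"
      by (rule sum_lessThan_eq_shifted; auto simp: F0_def F1_def F2_def F3_def cz)+
    then show ?thesis by (simp add: sum.distrib)
  qed
  also have "\<dots> = (\<Sum>a<K+3. (-1)^a *
     (c (int a) (u+1) + x u * c (int a - 1) u + c (int a - 1) (u+1) * y (u + of_nat K + 2 - of_nat a)
      + x u * c (int a - 2) u * y (u + of_nat K + 2 - of_nat a)) * f (u + of_nat (K+2) - of_nat a))"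
    by (simp add: sum.distrib[symmetric] F0_def F1_def F2_def F3_def algebra_simps)
  finally show ?thesis .
qed

lemma Lgen_expansion:
  fixes Ys :: "nat \<Rightarrow> complex \<Rightarrow> 'a::field"
  assumes "\<And>b v. b \<le> m \<Longrightarrow> Ys b v \<noteq> 0"
  shows "Lgen m Ys f u = (\<Sum>a<2*m+3. (-1)^a * Lcoef m Ys (int a) u * f (u + of_nat (2*m+2) - of_nat a))"
  using assms
proof (induction m arbitrary: Ys f u)
  case 0
  have "Lcoef 0 Ys 0 u = 1" "Lcoef 0 Ys 1 u = 0" "Lcoef 0 Ys 2 u = - (Ys 0 u / Ys 0 (u+1))"
    by (simp_all add: Lcoef_def Tsum_0 Tsum_above)
  then show ?case by (simp add: eval_nat_numeral)
next
  case (Suc m)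
  let ?Y = "shiftY Ys"
  have IH: "Lgen m ?Y g v = (\<Sum>a<(2*m+2)+1. (-1)^a * Lcoef m ?Y (int a) v * g (v + of_nat (2*m+2) - of_nat a))"
    for g v
    using Suc.IH[of ?Y g v] Suc.prems unfolding shiftY_def by (simp add: numeral_3_eq_3)
  have cz: "\<And>a v. a < 0 \<or> a > int (2*m+2) \<Longrightarrow> Lcoef m ?Y a v = 0" by (rule Lcoef_out) arith
  let ?x = "\<lambda>v. zbox (Suc m) Ys 1 (v + of_nat (Suc m))"
  let ?y = "\<lambda>v. zbox (Suc m) Ys (2 * Suc m) (v - of_nat (Suc m) - 1)"
  have "Lgen (Suc m) Ys f u = diff_factor ?x (Lgen m ?Y (diff_factor ?y f)) u" by simp
  also have "\<dots> = (\<Sum>a<(2*m+2)+3. (-1)^a * (Lcoef m ?Y (int a) (u+1) + ?x u * Lcoef m ?Y (int a - 1) u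
      + Lcoef m ?Y (int a - 1) (u+1) * ?y (u + of_nat (2*m+2) + 2 - of_nat a)
      + ?x u * Lcoef m ?Y (int a - 2) u * ?y (u + of_nat (2*m+2) + 2 - of_nat a))
      * f (u + of_nat ((2*m+2)+2) - of_nat a))"
    by (rule diff_factor_sandwich[OF IH cz])
  also have "\<dots> = (\<Sum>a<2*Suc m+3. (-1)^a * Lcoef (Suc m) Ys (int a) u * f (u + of_nat (2*Suc m+2) - of_nat a))"
  proof (rule sum.cong)
    fix a
    have "?y (u + of_nat (2*m+2) + 2 - of_nat a) = zbox (Suc m) Ys (2 * Suc m) (u + of_nat (Suc m) + 1 - of_nat a)"
      by (simp add: algebra_simps)
    then show "(-1)^a * (Lcoef m ?Y (int a) (u+1) + ?x u * Lcoef m ?Y (int a - 1) u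
      + Lcoef m ?Y (int a - 1) (u+1) * ?y (u + of_nat (2*m+2) + 2 - of_nat a)
      + ?x u * Lcoef m ?Y (int a - 2) u * ?y (u + of_nat (2*m+2) + 2 - of_nat a))
      * f (u + of_nat ((2*m+2)+2) - of_nat a)
      = (-1)^a * Lcoef (Suc m) Ys (int a) u * f (u + of_nat (2*Suc m+2) - of_nat a)"
      by (simp add: Lcoef_Suc[OF Suc.prems])
  qed simp
  finally show ?case .
qed

section \<open>The operator \<^const>\<open>Lop\<close> and its coefficients\<close>

lemma Q_nonzero:
  assumes indep: "alg_indep_Q n Q" and a: "1 \<le> a" "a \<le> n"
  shows "Q a u \<noteq> 0"
proof
  assume Q0: "Q a u = 0"
  define e0 :: "nat \<times> complex \<Rightarrow> nat" where "e0 = (\<lambda>x. if x = (a,u) then 1 else 0)"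
  define c :: "(nat \<times> complex \<Rightarrow> nat) \<Rightarrow> int" where "c = (\<lambda>e. if e = e0 then 1 else 0)"
  have supp_c: "{e. c e \<noteq> 0} = {e0}" unfolding c_def by auto
  have supp_e0: "{x. e0 x \<noteq> 0} = {(a,u)}" unfolding e0_def by auto
  have "(\<Sum>e\<in>{e. c e \<noteq> 0}. of_int (c e) * (\<Prod>x\<in>{x. e x \<noteq> 0}. Q (fst x) (snd x) ^ e x)) = 0"
    unfolding supp_c supp_e0 using Q0 by (simp add: c_def e0_def)
  moreover have "\<forall>e. c e \<noteq> 0 \<longrightarrow> finite {x. e x \<noteq> 0} \<and> {x. e x \<noteq> 0} \<subseteq> {1..n} \<times> UNIV"
    using supp_e0 a by (auto simp: c_def split: if_splits)
  moreover have "finite {e. c e \<noteq> 0}" unfolding supp_c by simp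
  ultimately have "\<forall>e. c e = 0"
    using indep unfolding alg_indep_Q_def by blast
  then show False unfolding c_def by (metis zero_neq_one)
qed

lemma Yf_nonzero:
  assumes "alg_indep_Q n Q" and "b \<le> n"
  shows "Yf n Q b v \<noteq> 0"
  using Q_nonzero[OF assms(1)] assms(2) unfolding Yf_def by auto

lemma Yf_0: "Yf n Q 0 v = 1"
  unfolding Yf_def by simp

text \<open>The family seen by the factors \<open>c, \<dots>, N+1-c\<close> of \<^const>\<open>Lop\<close>.\<close>
definition Ytail :: "nat \<Rightarrow> (nat \<Rightarrow> complex \<Rightarrow> 'a::field) \<Rightarrow> nat \<Rightarrow> nat \<Rightarrow> complex \<Rightarrow> 'a" where
  "Ytail n Q c b v = Yf n Q (b + c - 1) (v + (of_nat c - 1) / 2)"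

lemma shiftY_Ytail: "1 \<le> c \<Longrightarrow> shiftY (Ytail n Q c) = Ytail n Q (Suc c)"
  unfolding shiftY_def Ytail_def
  by (intro ext) (simp, rule arg_cong[where f="Yf n Q _"], simp add: field_simps)

lemma Ytail_1: "Ytail n Q 1 = Yf n Q"
  unfolding Ytail_def by (intro ext) simp

lemma xX_mult_xX:
  assumes indep: "alg_indep_Q n Q" and n1: "1 \<le> n"
  shows "xX n Q u * xX n Q (u - 1) = Yf n Q n (u + of_nat n / 2) / Yf n Q n (u + of_nat n / 2 + 1)"
proof -
  define q where "q t = Q n (u + of_nat n / 2 + t)" for t
  have nz: "q t \<noteq> 0" for t unfolding q_def using Q_nonzero[OF indep n1] by simp
  have X0: "xX n Q u = q 0 * q 2 / (q 1)^2"
    unfolding xX_def q_def by (simp add: add_divide_distrib algebra_simps)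
  have X1: "xX n Q (u - 1) = q (-1) * q 1 / (q 0)^2"
    unfolding xX_def q_def by (simp add: add_divide_distrib algebra_simps)
  have "Yf n Q n v = Q n (v - 1) / Q n (v + 1)" for v
    unfolding Yf_def dd_def using n1 by simp
  then have Y0: "Yf n Q n (u + of_nat n / 2) = q (-1) / q 1"
    and Y1: "Yf n Q n (u + of_nat n / 2 + 1) = q 0 / q 2"
    unfolding q_def by (simp_all add: algebra_simps)
  show ?thesis unfolding X0 X1 Y0 Y1 using nz by (simp add: field_simps power2_eq_square)
qed

lemma Lfactor_outer:
  assumes "m < n"
  shows "Lfactor n Q (n-m) = diff_factor (\<lambda>v. zbox (Suc m) (Ytail n Q (n-m)) 1 (v + of_nat (Suc m)))"
    and "Lfactor n Q (n+3+m)
      = diff_factor (\<lambda>v. zbox (Suc m) (Ytail n Q (n-m)) (2 * Suc m) (v - of_nat (Suc m) - 1))"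
proof -
  have "xf n Q (n-m) v = zU n Q (n-m) v" "xf n Q (n+3+m) v = zB n Q (n-m) v" for v
    unfolding xf_def by simp_all
  then have "xf n Q (n-m) (v + of_int (int n + 1 - int (n-m)))
      = zbox (Suc m) (Ytail n Q (n-m)) 1 (v + of_nat (Suc m))"
    and "xf n Q (n+3+m) (v + of_int (int n + 1 - int (n+3+m)))
      = zbox (Suc m) (Ytail n Q (n-m)) (2 * Suc m) (v - of_nat (Suc m) - 1)" for v
    unfolding zU_def zB_def zbox_first zbox_last Ytail_def using assms
    by (simp_all, (intro quotient_args_cong; simp add: of_nat_diff field_simps)+)
  then show "Lfactor n Q (n-m) = diff_factor (\<lambda>v. zbox (Suc m) (Ytail n Q (n-m)) 1 (v + of_nat (Suc m)))"
    and "Lfactor n Q (n+3+m)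
      = diff_factor (\<lambda>v. zbox (Suc m) (Ytail n Q (n-m)) (2 * Suc m) (v - of_nat (Suc m) - 1))"
    unfolding Lfactor_def diff_factor_def by (intro ext, simp)+
qed

text \<open>The two central factors form \<^term>\<open>Lgen 0\<close>: since \<open>x_(n+1) = -x_(n+2)\<close>, their
  first-order terms cancel.\<close>
lemma foldr_Lfactor_eq_Lgen:
  fixes Q :: "nat \<Rightarrow> complex \<Rightarrow> 'a::field"
  assumes indep: "alg_indep_Q n Q" and n1: "1 \<le> n" and m: "m \<le> n"
  shows "foldr (Lfactor n Q) [n+1-m..<n+3+m] f u = Lgen m (Ytail n Q (n+1-m)) f u"
  using m
proof (induction m arbitrary: f u)
  case 0
  have "[n+1-0..<n+3+0] = [n+1, n+2]" by (simp add: numeral_3_eq_3 upt_rec)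
  moreover have "Ytail n Q (Suc n) 0 v = Yf n Q n (v + of_nat n / 2)" for v
    unfolding Ytail_def by simp
  moreover have "u + 1 + of_nat n / 2 = u + of_nat n / 2 + 1" by simp
  ultimately show ?case
    using xX_mult_xX[OF indep n1, of u] by (simp add: Lfactor_def xf_def algebra_simps)
next
  case (Suc m)
  have mn: "m < n" using Suc.prems by simp
  have "[n+1-Suc m..<n+3+Suc m] = [n-m..<Suc (n+3+m)]" by simp
  also have "\<dots> = [n-m..<n+3+m] @ [n+3+m]" by (rule upt_Suc_append) simp
  also have "[n-m..<n+3+m] = (n-m) # [n+1-m..<n+3+m]"
    using mn by (simp add: upt_conv_Cons Suc_diff_le)
  finally have "foldr (Lfactor n Q) [n+1-Suc m..<n+3+Suc m] f u
      = Lfactor n Q (n-m) (foldr (Lfactor n Q) [n+1-m..<n+3+m] (Lfactor n Q (n+3+m) f)) u"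
    by simp
  also have "\<dots> = Lfactor n Q (n-m) (Lgen m (Ytail n Q (n+1-m)) (Lfactor n Q (n+3+m) f)) u"
    using Suc.IH[of "Lfactor n Q (n+3+m) f"] mn by (metis (no_types) le_less)
  also have "\<dots> = Lgen (Suc m) (Ytail n Q (n-m)) f u"
    using shiftY_Ytail[of "n-m" n Q] mn unfolding Lgen.simps Lfactor_outer[OF mn]
    by (simp add: Suc_diff_le)
  finally show ?case by simp
qed

lemma Lop_eq_Lgen:
  fixes Q :: "nat \<Rightarrow> complex \<Rightarrow> 'a::field"
  assumes "alg_indep_Q n Q" and "1 \<le> n"
  shows "Lop n Q f u = Lgen n (Yf n Q) f u"
  using foldr_Lfactor_eq_Lgen[OF assms order_refl, of f u]
  unfolding Lop_def Ytail_1[symmetric] by (simp add: add.commute)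

lemma zJ_eq_zbox: "1 \<le> p \<Longrightarrow> p \<le> 2*n \<Longrightarrow> zJ n Q p u = zbox n (Yf n Q) p u"
  unfolding zJ_def zU_def zB_def zbox_def
  by (simp, intro impI quotient_args_cong; simp add: of_nat_diff field_simps)

lemma Tbase_eq_Tsum: "Tbase n Q a v = Tsum n (Yf n Q) (int a) (v + of_nat a / 2 - 1 - of_nat n)"
proof -
  have "zJ n Q (xs!k) (v - 1/2 + of_int (int a + 1 - 2 * (int k + 1)) / 2) =
        zbox n (Yf n Q) (xs!k) (v + of_nat a / 2 - 1 - of_nat n + of_nat n - of_nat k)"
    if xs: "xs \<in> admT n a" and k: "k < a" for xs k
  proof -
    have "1 \<le> xs!k" "xs!k \<le> 2*n" using k admT_D[OF xs] nth_mem by fastforce+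
    then have zJ: "zJ n Q (xs!k) w = zbox n (Yf n Q) (xs!k) w" for w by (rule zJ_eq_zbox)
    show ?thesis
      unfolding zJ by (intro arg_cong[where f="zbox n (Yf n Q) (xs!k)"]) (simp add: field_simps)
  qed
  then show ?thesis
    unfolding Tbase_def Tsum_def tab_weight_eq_prod using admT_D by (auto intro!: sum.cong prod.cong)
qed

lemma Tf_eq_Tsum: "a \<le> n \<Longrightarrow> Tf n Q (int a) v = Tsum n (Yf n Q) (int a) (v + of_nat a / 2 - 1 - of_nat n)"
  by (cases "a = 0") (simp_all add: Tf_def Tsum_0 Tbase_eq_Tsum)

lemma Tf_antisym:
  assumes "0 \<le> a" "a \<le> 2 * int n + 2"
  shows "Tf n Q (2 * int n + 2 - a) v = - Tf n Q a v"
  using assms unfolding Tf_def by (auto simp: nat_diff_distrib)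

lemma Lcoef_eq_Tf:
  fixes Q :: "nat \<Rightarrow> complex \<Rightarrow> 'a::field"
  assumes j: "j \<le> 2*n+2"
  shows "Lcoef n (Yf n Q) (int (2*n+2) - int j) u = - Tf n Q (int j) (u + of_nat j / 2)"
proof -
  consider "j \<le> n" | "j = n+1" | "n+2 \<le> j" by linarith
  then show ?thesis
  proof cases
    case 1
    have "Lcoef n (Yf n Q) (int (2*n+2) - int j) u
        = - Tsum n (Yf n Q) (int j) (u + of_nat j - of_nat n - 1)"
      unfolding Lcoef_def using 1 by (simp add: Yf_0)
    then show ?thesis using Tf_eq_Tsum[OF 1, of Q "u + of_nat j / 2"] by (simp add: algebra_simps)
  next
    case 2
    then show ?thesis by (simp add: Tf_def Lcoef_low Tsum_above)
  next
    case 3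
    define a where "a = 2*n+2-j"
    have a: "a \<le> n" "int (2*n+2) - int j = int a" "int j = 2 * int n + 2 - int a"
      unfolding a_def using 3 j by auto
    have "(of_nat a :: complex) = 2 * of_nat n + 2 - of_nat j" unfolding a_def using j by (simp add: of_nat_diff)
    then have arg_eq: "u + of_nat j / 2 + of_nat a / 2 - 1 - of_nat n = u" by (simp add: field_simps)
    have "Tf n Q (int a) (u + of_nat j / 2) = Tsum n (Yf n Q) (int a) u"
      using Tf_eq_Tsum[OF a(1), of Q "u + of_nat j / 2"] unfolding arg_eq .
    then show ?thesis
      unfolding a(2,3) using Tf_antisym[of "int a" n Q] a(1) by (simp add: Lcoef_low)
  qed
qed

lemma Lop_expansion:
  fixes Q :: "nat \<Rightarrow> complex \<Rightarrow> 'a::field"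
  assumes "alg_indep_Q n Q" and "1 \<le> n"
  shows "Lop n Q f u = (\<Sum>a<2*n+3. (-1)^a * Lcoef n (Yf n Q) (int a) u * f (u + of_nat (2*n+2) - of_nat a))"
  unfolding Lop_eq_Lgen[OF assms] using Yf_nonzero[OF assms(1)] by (rule Lgen_expansion)

lemma minus_one_power_diff_even: "even N \<Longrightarrow> j \<le> N \<Longrightarrow> (-1::'a::ring_1)^(N-j) = (-1)^j"
  by (cases "even j") (simp_all add: even_diff_nat)

lemma Lop_kernel_recurrence:
  fixes Q :: "nat \<Rightarrow> complex \<Rightarrow> 'a::field"
  assumes indep: "alg_indep_Q n Q" and n1: "1 \<le> n" and L0: "Lop n Q g u = 0"
  shows "g (u + of_nat (2*n+2)) = (\<Sum>j<2*n+2. (-1)^j * Tf n Q (int j) (u + of_nat j / 2) * g (u + of_nat j))"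
proof -
  let ?N = "2*n+2"
  define G where "G a = (-1)^a * Lcoef n (Yf n Q) (int a) u * g (u + of_nat ?N - of_nat a)" for a
  have "0 = (\<Sum>a<?N+1. G a)" using L0 unfolding Lop_expansion[OF indep n1] G_def by (simp add: numeral_3_eq_3)
  also have "\<dots> = (\<Sum>j<?N+1. G (?N - j))"
    using sum.nat_diff_reindex[of G "?N+1", symmetric] by simp
  also have "\<dots> = (\<Sum>j<?N+1. - ((-1)^j * Tf n Q (int j) (u + of_nat j / 2) * g (u + of_nat j)))"
  proof (rule sum.cong[OF refl])
    fix j assume "j \<in> {..<?N+1}"
    then have j: "j \<le> ?N" by simp
    have "(-1::'a)^(?N - j) = (-1)^j" by (rule minus_one_power_diff_even) (use j in auto)
    moreover have "Lcoef n (Yf n Q) (int ?N - int j) u = - Tf n Q (int j) (u + of_nat j / 2)"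
      by (rule Lcoef_eq_Tf[OF j])
    moreover have "int (?N - j) = int ?N - int j" "u + of_nat ?N - of_nat (?N - j) = u + (of_nat j :: complex)"
      using j by (simp_all add: of_nat_diff)
    ultimately show "G (?N - j) = - ((-1)^j * Tf n Q (int j) (u + of_nat j / 2) * g (u + of_nat j))"
      unfolding G_def by simp
  qed
  also have "\<dots> = g (u + of_nat ?N) - (\<Sum>j<?N. (-1)^j * Tf n Q (int j) (u + of_nat j / 2) * g (u + of_nat j))"
    by (simp add: sum_negf Tf_def)
  finally show ?thesis by (simp add: algebra_simps)
qed

section \<open>The functions \<^const>\<open>Hf\<close>\<close>

lemma Hf_initial: "k \<le> 2*n+1 \<Longrightarrow> Hf n Q i k v = (-1)^i * (if i = k then 1 else 0)"
proof (induction k arbitrary: i v)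
  case (Suc k)
  have "Hf n Q (2*n+1) k x = 0" for x using Suc.IH[of "2*n+1" x] Suc.prems by simp
  then show ?case using Suc.IH[of "i - 1"] Suc.prems by (cases i) simp_all
qed simp

lemma Hf_Suc_shifted:
  "Hf n Q i (Suc k) (u + of_nat i / 2) =
     - Tf n Q (int i) (u + of_nat i / 2) * Hf n Q (2*n+1) k (u + 1 + of_nat (2*n+1) / 2)
     - (if i = 0 then 0 else Hf n Q (i - 1) k (u + 1 + of_nat (i - 1) / 2))"
proof -
  have arg_last: "u + of_nat i / 2 + (of_nat (2 * n + 3) - of_nat i) / 2 = u + 1 + of_nat (2*n+1) / (2::complex)"
    by (simp add: field_simps)
  have arg_prev: "u + of_nat i / 2 + 1 / 2 = u + 1 + of_nat (i - 1) / (2::complex)" if "i \<noteq> 0"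
    using that by (simp add: of_nat_diff field_simps)
  show ?thesis
  proof (cases "i = 0")
    case True
    then show ?thesis unfolding Hf.simps(2) arg_last by simp
  next
    case False
    then show ?thesis unfolding Hf.simps(2) arg_last arg_prev[OF False] by simp
  qed
qed

lemma Hf_shift_expansion:
  fixes Q :: "nat \<Rightarrow> complex \<Rightarrow> 'a::field" and w :: "complex \<Rightarrow> 'a"
  assumes indep: "alg_indep_Q n Q" and n1: "1 \<le> n" and L0: "\<And>u. Lop n Q w u = 0"
  shows "w (u + of_nat k) = (\<Sum>i<2*n+2. (-1)^i * Hf n Q i k (u + of_nat i / 2) * w (u + of_nat i))"
proof (induction k arbitrary: u)
  case 0
  have "(\<Sum>i<2*n+2. (-1)^i * Hf n Q i 0 (u + of_nat i / 2) * w (u + of_nat i))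
      = (\<Sum>i<2*n+2. if i = 0 then w u else 0)"
    by (rule sum.cong) auto
  then show ?case by simp
next
  case (Suc k)
  let ?N = "2*n+1"
  let ?H = "\<lambda>i. Hf n Q i k (u + 1 + of_nat i / 2)"
  define S where "S = (\<Sum>j<Suc ?N. (-1)^j * Tf n Q (int j) (u + of_nat j / 2) * w (u + of_nat j))"
  have wN: "w (u + 1 + of_nat ?N) = S"
    using Lop_kernel_recurrence[OF indep n1 L0] unfolding S_def by (simp add: add.assoc)
  have "w (u + of_nat (Suc k)) = (\<Sum>i<Suc ?N. (-1)^i * ?H i * w (u + 1 + of_nat i))"
    using Suc.IH[of "u+1"] by (simp add: add_ac)
  also have "\<dots> = (\<Sum>i<?N. (-1)^i * ?H i * w (u + 1 + of_nat i)) - ?H ?N * S"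
    unfolding sum.lessThan_Suc wN by simp
  also have "\<dots> = (\<Sum>i<Suc ?N. (-1)^i * Hf n Q i (Suc k) (u + of_nat i / 2) * w (u + of_nat i))"
  proof -
    have "(\<Sum>i<Suc ?N. (-1)^i * Hf n Q i (Suc k) (u + of_nat i / 2) * w (u + of_nat i))
       = (\<Sum>i<Suc ?N. - (?H ?N * ((-1)^i * Tf n Q (int i) (u + of_nat i / 2) * w (u + of_nat i))))
         - (\<Sum>i<Suc ?N. (-1)^i * (if i = 0 then 0 else ?H (i - 1)) * w (u + of_nat i))"
      unfolding Hf_Suc_shifted sum_subtractf[symmetric] by (rule sum.cong) (simp_all add: algebra_simps)
    also have "(\<Sum>i<Suc ?N. - (?H ?N * ((-1)^i * Tf n Q (int i) (u + of_nat i / 2) * w (u + of_nat i))))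
        = - (?H ?N * S)"
      unfolding S_def sum_negf sum_distrib_left by simp
    also have "(\<Sum>i<Suc ?N. (-1)^i * (if i = 0 then 0 else ?H (i - 1)) * w (u + of_nat i))
       = - (\<Sum>i<?N. (-1)^i * ?H i * w (u + 1 + of_nat i))"
      unfolding sum.lessThan_Suc_shift sum_negf[symmetric] by (simp add: add_ac)
    finally show ?thesis by simp
  qed
  finally show ?case by simp
qed

subsection \<open>The Casorati determinant\<close>

lemma det_last_col_linear:
  fixes A :: "'a::comm_ring_1 mat"
  assumes A: "A \<in> carrier_mat N N" and N: "0 < N" and fin: "finite J"
    and col: "\<And>r. r < N \<Longrightarrow> A $$ (r, N-1) = (\<Sum>j\<in>J. c j * v j r)"
  shows "det A = (\<Sum>j\<in>J. c j * det (mat N N (\<lambda>(r,s). if s = N-1 then v j r else A $$ (r,s))))"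
proof -
  define B where "B j = mat N N (\<lambda>(r,s). if s = N-1 then v j r else A $$ (r,s))" for j
  have Bc: "B j \<in> carrier_mat N N" for j unfolding B_def by simp
  have cof: "cofactor (B j) r (N-1) = cofactor A r (N-1)" for j r
  proof -
    have "mat_delete (B j) r (N-1) = mat_delete A r (N-1)"
      by (rule eq_matI) (use A in \<open>auto simp: mat_delete_def B_def\<close>)
    then show ?thesis unfolding cofactor_def by simp
  qed
  have dB: "det (B j) = (\<Sum>r<N. v j r * cofactor A r (N-1))" for j
  proof -
    have "det (B j) = (\<Sum>r<N. B j $$ (r, N-1) * cofactor (B j) r (N-1))"
      by (rule laplace_expansion_column[OF Bc]) (use N in simp)
    also have "\<dots> = (\<Sum>r<N. v j r * cofactor A r (N-1))"
    proof (rule sum.cong[OF refl])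
      fix r assume "r \<in> {..<N}"
      then have "B j $$ (r, N-1) = v j r" unfolding B_def using N by simp
      then show "B j $$ (r, N-1) * cofactor (B j) r (N-1) = v j r * cofactor A r (N-1)"
        by (simp only: cof)
    qed
    finally show ?thesis .
  qed
  have "det A = (\<Sum>r<N. A $$ (r, N-1) * cofactor A r (N-1))"
    by (rule laplace_expansion_column[OF A]) (use N in simp)
  also have "\<dots> = (\<Sum>r<N. (\<Sum>j\<in>J. c j * v j r) * cofactor A r (N-1))"
    using col by (intro sum.cong) simp_all
  also have "\<dots> = (\<Sum>j\<in>J. c j * (\<Sum>r<N. v j r * cofactor A r (N-1)))"
    by (simp add: sum_distrib_right sum_distrib_left mult.assoc sum.swap[of _ J])
  also have "\<dots> = (\<Sum>j\<in>J. c j * det (B j))" by (simp add: dB)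
  finally show ?thesis unfolding B_def .
qed

lemma casorati_append_linear:
  fixes w :: "nat \<Rightarrow> complex \<Rightarrow> 'a::field"
  assumes fin: "finite J"
    and col: "\<And>r. 1 \<le> r \<Longrightarrow> r \<le> Suc (length xs) \<Longrightarrow>
                w r (u + of_int x) = (\<Sum>j\<in>J. c j * w r (u + of_int (d j)))"
  shows "casorati w (xs @ [x]) u = (\<Sum>j\<in>J. c j * casorati w (xs @ [d j]) u)"
proof -
  let ?N = "Suc (length xs)"
  let ?A = "mat ?N ?N (\<lambda>(r, s). w (r + 1) (u + of_int ((xs @ [x]) ! s)))"
  have "casorati w (xs @ [x]) u = det ?A" unfolding casorati_def by simp
  also have "\<dots> = (\<Sum>j\<in>J. c j * det (mat ?N ?N (\<lambda>(r, s).
      if s = ?N - 1 then w (r + 1) (u + of_int (d j)) else ?A $$ (r, s))))"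
    by (rule det_last_col_linear[OF _ _ fin]) (use col in \<open>auto simp: nth_append\<close>)
  also have "\<dots> = (\<Sum>j\<in>J. c j * casorati w (xs @ [d j]) u)"
  proof -
    have "mat ?N ?N (\<lambda>(r, s). if s = ?N - 1 then w (r + 1) (u + of_int (d j)) else ?A $$ (r, s))
        = mat ?N ?N (\<lambda>(r, s). w (r + 1) (u + of_int ((xs @ [d j]) ! s)))" for j
      by (rule eq_matI) (auto simp: nth_append)
    then show ?thesis unfolding casorati_def by simp
  qed
  finally show ?thesis .
qed

lemma casorati_append_mem:
  assumes "x \<in> set xs"
  shows "casorati w (xs @ [x]) u = 0"
proof -
  obtain c where c: "c < length xs" "xs ! c = x" using assms by (auto simp: in_set_conv_nth)
  let ?N = "Suc (length xs)"
  let ?A = "mat ?N ?N (\<lambda>(r, s). w (r + 1) (u + of_int ((xs @ [x]) ! s)))"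
  have "col ?A c = col ?A (length xs)" using c by (intro eq_vecI) (auto simp: nth_append)
  then have "det ?A = 0" using c by (intro det_identical_columns[of ?A ?N c "length xs"]) auto
  then show ?thesis unfolding casorati_def by simp
qed

lemma nth_upto_skip_append:
  assumes "i \<le> M" "s \<le> M"
  shows "([0..int i - 1] @ [int i + 1..int M] @ [x]) ! s
       = (if s < i then int s else if s < M then int s + 1 else x)"
proof -
  have "length [0..int i - 1] = i" "length [int i + 1..int M] = M - i" using assms(1) by simp_all
  then show ?thesis using assms by (auto simp: nth_append nth_upto)
qed

lemma casorati_skip_append_self:
  assumes i: "i \<le> M"
  shows "casorati w ([0..int i - 1] @ [int i + 1..int M] @ [int i]) u
       = (-1)^(M - i) * casorati w [0..int M] u"
proof -
  let ?L = "[0..int i - 1] @ [int i + 1..int M] @ [int i]"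
  let ?V = "mat (Suc M) (Suc M) (\<lambda>(r, s). w (r + 1) (u + of_int ([0..int M] ! s)))"
  define A where "A = mat (Suc M) (Suc M) (\<lambda>(r, s). w (r + 1) (u + of_int (?L ! s)))"
  have len: "length ?L = Suc M" "length [0..int M] = Suc M" using i by simp_all
  have "casorati w ?L u = det A" unfolding casorati_def A_def len ..
  also have "\<dots> = (-1)^((M - i) * 1) * det (mat (Suc M) (Suc M) (\<lambda>(r, s).
      A $$ (r, if s < i then s else if s < i + 1 then s + (M - i) else s - 1)))"
    by (rule det_swap_final_cols) (use i in \<open>simp_all add: A_def\<close>)
  also have "mat (Suc M) (Suc M) (\<lambda>(r, s).
      A $$ (r, if s < i then s else if s < i + 1 then s + (M - i) else s - 1)) = ?V"
  proof (rule eq_matI)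
    fix r s assume "r < dim_row ?V" "s < dim_col ?V"
    then have r: "r < Suc M" and s: "s \<le> M" by simp_all
    consider "s < i" | "s = i" | "i < s" by linarith
    then show "mat (Suc M) (Suc M) (\<lambda>(r, s).
        A $$ (r, if s < i then s else if s < i + 1 then s + (M - i) else s - 1)) $$ (r, s) = ?V $$ (r, s)"
      by cases (use r s i in \<open>auto simp: A_def nth_upto_skip_append nth_upto\<close>)
  qed simp_all
  also have "det ?V = casorati w [0..int M] u" unfolding casorati_def len ..
  finally show ?thesis by simp
qed

lemma casorati_cramer:
  fixes w :: "nat \<Rightarrow> complex \<Rightarrow> 'a::field" and h :: "nat \<Rightarrow> 'a"
  assumes i: "i \<le> 2*n+1"
    and rec: "\<And>r. 1 \<le> r \<Longrightarrow> r \<le> 2*n+2 \<Longrightarrow>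
                  w r (u + of_nat k) = (\<Sum>j<2*n+2. (-1)^j * h j * w r (u + of_nat j))"
  shows "casorati w ([0..int i - 1] @ [int i + 1..int (2*n+1)] @ [int k]) u
       = - h i * casorati w [0..int (2*n+1)] u"
proof -
  let ?xs = "[0..int i - 1] @ [int i + 1..int (2*n+1)]"
  have "casorati w (?xs @ [int k]) u = (\<Sum>j<2*n+2. ((-1)^j * h j) * casorati w (?xs @ [int j]) u)"
    by (rule casorati_append_linear) (use rec i in auto)
  also have "\<dots> = (\<Sum>j<2*n+2. if j = i then ((-1)^i * h i) * casorati w (?xs @ [int i]) u else 0)"
  proof -
    have "casorati w (?xs @ [int j]) u = 0" if "j < 2*n+2" "j \<noteq> i" for j
      by (rule casorati_append_mem) (use that in auto)
    then show ?thesis by (intro sum.cong refl) auto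
  qed
  also have "\<dots> = ((-1)^i * h i) * casorati w (?xs @ [int i]) u"
  proof -
    have "i < 2*n+2" using i by simp
    then show ?thesis by (simp only: sum.delta[OF finite_lessThan] lessThan_iff if_True)
  qed
  also have "casorati w (?xs @ [int i]) u = (-1)^(2*n+1-i) * casorati w [0..int (2*n+1)] u"
    unfolding append_assoc by (rule casorati_skip_append_self[OF i])
  also have "((-1)^i * h i) * ((-1)^(2*n+1-i) * casorati w [0..int (2*n+1)] u)
      = (-1)^(i + (2*n+1-i)) * h i * casorati w [0..int (2*n+1)] u"
    by (simp add: power_add)
  also have "i + (2*n+1-i) = 2*n+1" using i by simp
  finally show ?thesis by simp
qed

lemma Tf_neg: "a < 0 \<Longrightarrow> Tf n Q a v = 0"
  unfolding Tf_def by simp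

lemma Tf_above: "a > 2 * int n + 2 \<Longrightarrow> Tf n Q a v = 0"
  unfolding Tf_def by simp

text \<open>The matrix of part (i) with \<open>0\<close>-based indices, \<open>\<lambda>'\<^sub>1 = N - i\<close> and
  \<open>\<lambda>'\<^sub>j = 1\<close> for \<open>j \<ge> 2\<close>.\<close>
definition Hmat :: "nat \<Rightarrow> (nat \<Rightarrow> complex \<Rightarrow> 'a::field) \<Rightarrow> nat \<Rightarrow> complex \<Rightarrow> nat \<Rightarrow> 'a mat" where
  "Hmat n Q i u s = mat s s (\<lambda>(a, b).
     if a = 0 then Tf n Q (int (2*n+2) - int i + int b) (u + (of_nat i + of_nat b) / 2)
     else Tf n Q (1 - int a + int b) (u + (of_nat (2*n+1) + of_nat a + of_nat b) / 2))"

lemma Hmat_carrier: "Hmat n Q i u s \<in> carrier_mat s s"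
  unfolding Hmat_def by simp

lemma mat_delete_Hmat_0:
  "mat_delete (Hmat n Q i u (Suc s)) 0 0 = Hmat n Q (2*n+1) (u+1) s"
proof (rule eq_matI)
  fix a b assume "a < dim_row (Hmat n Q (2*n+1) (u+1) s)" "b < dim_col (Hmat n Q (2*n+1) (u+1) s)"
  then show "mat_delete (Hmat n Q i u (Suc s)) 0 0 $$ (a, b) = Hmat n Q (2*n+1) (u+1) s $$ (a, b)"
    unfolding mat_delete_def Hmat_def
    by (cases "a = 0") (simp_all, (rule arg_cong2[where f="Tf n Q"]; simp add: field_simps)+)
qed (simp_all add: mat_delete_def Hmat_def)

lemma mat_delete_Hmat_1:
  assumes "1 \<le> i"
  shows "mat_delete (Hmat n Q i u (Suc s)) 1 0 = Hmat n Q (i-1) (u+1) s"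
proof (rule eq_matI)
  fix a b assume "a < dim_row (Hmat n Q (i-1) (u+1) s)" "b < dim_col (Hmat n Q (i-1) (u+1) s)"
  then show "mat_delete (Hmat n Q i u (Suc s)) 1 0 $$ (a, b) = Hmat n Q (i-1) (u+1) s $$ (a, b)"
    unfolding mat_delete_def Hmat_def using assms
    by (cases "a = 0") (simp_all add: of_nat_diff, (rule arg_cong2[where f="Tf n Q"]; simp add: field_simps)+)
qed (simp_all add: mat_delete_def Hmat_def)

lemma det_Hmat_Suc:
  fixes Q :: "nat \<Rightarrow> complex \<Rightarrow> 'a::field"
  assumes s: "1 \<le> s" and i: "i \<le> 2*n+1"
  shows "det (Hmat n Q i u (Suc s))
    = Tf n Q (int (2*n+2) - int i) (u + of_nat i / 2) * det (Hmat n Q (2*n+1) (u+1) s)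
      - (if i = 0 then 0 else det (Hmat n Q (i-1) (u+1) s))"
proof -
  let ?M = "Hmat n Q i u (Suc s)"
  obtain s' where s': "s = Suc s'" using s by (cases s) auto
  have "det ?M = (\<Sum>r<Suc s. ?M $$ (r,0) * cofactor ?M r 0)"
    by (rule laplace_expansion_column[OF Hmat_carrier]) simp
  also have "\<dots> = ?M $$ (0,0) * cofactor ?M 0 0 + ?M $$ (1,0) * cofactor ?M 1 0"
  proof -
    have "?M $$ (Suc (Suc r), 0) = 0" if "r < s'" for r
      unfolding Hmat_def using that s' by (simp add: Tf_neg)
    then show ?thesis unfolding s' by (simp add: sum.lessThan_Suc_shift del: sum.lessThan_Suc)
  qed
  also have "?M $$ (0,0) = Tf n Q (int (2*n+2) - int i) (u + of_nat i / 2)"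
    unfolding Hmat_def by simp
  also have "?M $$ (1,0) = 1" unfolding Hmat_def using s' by (simp add: Tf_def)
  also have "cofactor ?M 0 0 = det (Hmat n Q (2*n+1) (u+1) s)"
    unfolding cofactor_def mat_delete_Hmat_0 by simp
  also have "cofactor ?M 1 0 = - (if i = 0 then 0 else det (Hmat n Q (i-1) (u+1) s))"
  proof (cases "i = 0")
    case True
    let ?D = "mat_delete ?M 1 0"
    have "?D \<in> carrier_mat s s" unfolding mat_delete_def Hmat_def by simp
    then have "det ?D = (\<Sum>b<s. ?D $$ (0,b) * cofactor ?D 0 b)"
      by (rule laplace_expansion_row) (use s in simp)
    also have "\<dots> = 0"
      using True by (intro sum.neutral) (auto simp: mat_delete_def Hmat_def Tf_above)
    finally show ?thesis using True unfolding cofactor_def by simp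
  next
    case False
    then show ?thesis using mat_delete_Hmat_1[of i n Q u s] unfolding cofactor_def by simp
  qed
  finally show ?thesis by simp
qed

lemma Hf_eq_det_Hmat:
  fixes Q :: "nat \<Rightarrow> complex \<Rightarrow> 'a::field"
  assumes "1 \<le> s" and "i \<le> 2*n+1"
  shows "Hf n Q i (2*n+1+s) (u + of_nat i / 2) = - det (Hmat n Q i u s)"
  using assms
proof (induction s arbitrary: i u)
  case 0
  then show ?case by simp
next
  case (Suc s)
  have idx: "int (2*n+2) - int i = 2 * int n + 2 - int i" by simp
  have Tf_reflect: "- Tf n Q (int i) (u + of_nat i / 2) = Tf n Q (int (2*n+2) - int i) (u + of_nat i / 2)"
    unfolding idx by (rule Tf_antisym[symmetric]) (use Suc.prems in simp_all)
  show ?case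
  proof (cases "s = 0")
    case True
    have "det (Hmat n Q i u (Suc s)) = Tf n Q (int (2*n+2) - int i) (u + of_nat i / 2)"
      using True by (subst det_single) (auto simp: Hmat_def)
    moreover have "Hf n Q i (2*n+1+Suc s) (u + of_nat i / 2)
        = - Tf n Q (int i) (u + of_nat i / 2) * Hf n Q (2*n+1) (2*n+1) (u + 1 + of_nat (2*n+1) / 2)
          - (if i = 0 then 0 else Hf n Q (i - 1) (2*n+1) (u + 1 + of_nat (i - 1) / 2))"
      unfolding True add_Suc_right add_0_right by (rule Hf_Suc_shifted)
    moreover have "Hf n Q (2*n+1) (2*n+1) v = -1" "i \<noteq> 0 \<Longrightarrow> Hf n Q (i-1) (2*n+1) v = 0" for v
      using Suc.prems by (simp_all add: Hf_initial del: Hf.simps)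
    ultimately show ?thesis using Tf_reflect by (simp del: Hf.simps)
  next
    case False
    then have s1: "1 \<le> s" by simp
    have "Hf n Q (2*n+1) (2*n+1+s) ((u+1) + of_nat (2*n+1) / 2) = - det (Hmat n Q (2*n+1) (u+1) s)"
      by (rule Suc.IH[OF s1]) simp
    moreover have "Hf n Q (i-1) (2*n+1+s) ((u+1) + of_nat (i-1) / 2) = - det (Hmat n Q (i-1) (u+1) s)"
      if "i \<noteq> 0"
      by (rule Suc.IH[OF s1]) (use Suc.prems in simp)
    ultimately show ?thesis
      unfolding add_Suc_right Hf_Suc_shifted det_Hmat_Suc[OF s1 Suc.prems(2)] Tf_reflect[symmetric]
      by (simp del: Hf.simps)
  qed
qed

lemma Hmat_eq_let_form:
  "Hmat n Q i u s = mat s s (\<lambda>(j0, l0).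
      let j = int j0 + 1; l = int l0 + 1;
          lam = 1 + (if j = 1 then int (2 * n + 2) - int i - 1 else 0)
      in Tf n Q (lam - j + l) (u + of_int (int (2 * n + 2) - 2 - lam + j + l) / 2))"
  unfolding Hmat_def Let_def
proof (intro cong[OF refl, where f="mat s s"] ext, clarify)
  fix a b :: nat
  show "(if a = 0 then Tf n Q (int (2*n+2) - int i + int b) (u + (of_nat i + of_nat b) / 2)
      else Tf n Q (1 - int a + int b) (u + (of_nat (2*n+1) + of_nat a + of_nat b) / 2))
    = Tf n Q (1 + (if int a + 1 = 1 then int (2 * n + 2) - int i - 1 else 0) - (int a + 1) + (int b + 1))
        (u + of_int (int (2 * n + 2) - 2 - (1 + (if int a + 1 = 1 then int (2 * n + 2) - int i - 1 else 0))
          + (int a + 1) + (int b + 1)) / 2)"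
    by (cases "a = 0") (simp_all, (rule arg_cong2[where f="Tf n Q"]; simp add: field_simps)+)
qed

lemma Hf_eq_det_let_form:
  fixes Q :: "nat \<Rightarrow> complex \<Rightarrow> 'a::field"
  assumes i: "i \<le> 2*n+1" and k: "2*n+2 \<le> k"
  shows "Hf n Q i k (u + of_nat i / 2) =
    - det (mat (k - (2 * n + 2) + 1) (k - (2 * n + 2) + 1) (\<lambda>(j0, l0).
        let j = int j0 + 1; l = int l0 + 1;
            lam = 1 + (if j = 1 then int (2 * n + 2) - int i - 1 else 0)
        in Tf n Q (lam - j + l) (u + of_int (int (2 * n + 2) - 2 - lam + j + l) / 2)))"
proof -
  define s where "s = k - (2*n+1)"
  have s: "1 \<le> s" "k = 2*n+1+s" "k - (2*n+2) + 1 = s" using k unfolding s_def by simp_all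
  show ?thesis unfolding Hmat_eq_let_form[symmetric] s(3) by (subst s(2)) (rule Hf_eq_det_Hmat[OF s(1) i])
qed

lemma Hf_eq_casorati_quotient:
  fixes Q :: "nat \<Rightarrow> complex \<Rightarrow> 'a::field" and w :: "nat \<Rightarrow> complex \<Rightarrow> 'a"
  assumes indep: "alg_indep_Q n Q" and n1: "1 \<le> n" and i: "i \<le> 2*n+1"
    and L: "\<forall>m\<in>{1..2*n+2}. \<forall>u. Lop n Q (w m) u = 0"
    and C: "casorati w [0..int (2*n+1)] u \<noteq> 0"
  shows "Hf n Q i k (u + of_nat i / 2) =
    - casorati w ([0..int i - 1] @ [int i + 1..int (2*n+1)] @ [int k]) u / casorati w [0..int (2*n+1)] u"
proof -
  have "w r (u + of_nat k) = (\<Sum>j<2*n+2. (-1)^j * Hf n Q j k (u + of_nat j / 2) * w r (u + of_nat j))"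
    if "1 \<le> r" "r \<le> 2*n+2" for r
    using Hf_shift_expansion[OF indep n1] L that by simp
  then have "casorati w ([0..int i - 1] @ [int i + 1..int (2*n+1)] @ [int k]) u
      = - Hf n Q i k (u + of_nat i / 2) * casorati w [0..int (2*n+1)] u"
    by (rule casorati_cramer[OF i])
  then show ?thesis using C by (simp add: field_simps)
qed

theorem mainTheorem7:
  fixes n :: nat and Q :: "nat \<Rightarrow> complex \<Rightarrow> 'a::field" and i :: nat
  assumes n2: "n \<ge> 2"
    and indep: "alg_indep_Q n Q"
    and i_le: "i \<le> 2 * n + 1"
  shows "(\<forall>k u. k \<le> 2 * n + 1 \<longrightarrow>
            Hf n Q i k (u + of_nat i / 2) = (-1) ^ i * (if i = k then 1 else 0))
       \<and> (\<forall>k u. k \<ge> 2 * n + 2 \<longrightarrow>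
            Hf n Q i k (u + of_nat i / 2) =
              - det (mat (k - (2 * n + 2) + 1) (k - (2 * n + 2) + 1) (\<lambda>(j0, l0).
                  let j = int j0 + 1; l = int l0 + 1;
                      lam = 1 + (if j = 1 then int (2 * n + 2) - int i - 1 else 0)
                  in Tf n Q (lam - j + l) (u + of_int (int (2 * n + 2) - 2 - lam + j + l) / 2))))
       \<and> (\<forall>w :: nat \<Rightarrow> complex \<Rightarrow> 'a.
            (\<forall>m\<in>{1..2 * n + 2}. \<forall>u. Lop n Q (w m) u = 0) \<longrightarrow>
            (\<forall>u. casorati w [0..int (2 * n + 1)] u \<noteq> 0) \<longrightarrow>
            (\<forall>k u. Hf n Q i k (u + of_nat i / 2) =
                - casorati w ([0..int i - 1] @ [int i + 1..int (2 * n + 1)] @ [int k]) u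
                  / casorati w [0..int (2 * n + 1)] u))"
proof -
  have n1: "1 \<le> n" using n2 by simp
  show ?thesis
    by (intro conjI allI impI Hf_initial Hf_eq_det_let_form[OF i_le]
        Hf_eq_casorati_quotient[OF indep n1 i_le]) auto
qed

end
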